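(* Fix integers $n,k\ge1$ and a positive integer $b$ coprime with $n$, and let $E=\mathbb Z[q]/(\Phi_n(q)^k)$. The algebra map $\mathbb Z[q]\to\mathbb Z[q]$, $q\mapsto q^b$, descends to an algebra endomorphism $F_b:E\to E$. The image $F_b(E)$ is a free $\mathbb Z$-submodule of $E$ of rank equal to $\operatorname{rk}(E)$, and its index in $E$ is $b^{k(k-1)\varphi(n)/2}$.
   Context: $\Phi_n(q)$ is the $n$th cyclotomic polynomial and $\varphi$ is Euler's totient function. *)

theory Defs
  imports "HOL-Computational_Algebra.Polynomial" "HOL-Number_Theory.Totient" Complex_Main
begin

definition cyclo :: "nat \<Rightarrow> int poly" where
  "cyclo n = (THE p. map_poly of_int p =
      (\<Prod>j\<in>{j. j < n \<and> coprime j n}. [:- cis (2 * pi * real j / real n), 1:]))"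

definition frob :: "nat \<Rightarrow> int poly \<Rightarrow> int poly" where
  "frob b p = pcompose p (monom 1 b)"

text \<open>For an additive subgroup S of Z[q] containing the ideal (M), the list vs gives a
  Z-basis of the Z-module S/(M): every element of S is congruent mod M to a unique
  integer combination of vs (and all vs lie in S).\<close>
definition quot_Z_basis :: "int poly \<Rightarrow> int poly set \<Rightarrow> int poly list \<Rightarrow> bool" where
  "quot_Z_basis M S vs \<longleftrightarrow> set vs \<subseteq> S \<and>
     (\<forall>x\<in>S. \<exists>!c::int list. length c = length vs \<and>
        M dvd (x - (\<Sum>i<length vs. smult (c ! i) (vs ! i))))"

end

theory Submission
  imports Defs "Jordan_Normal_Form.Char_Poly" "Jordan_Normal_Form.Column_Operations"
begin

(* Let M = Phi_n^k (degree N = k phi(n)) and E = Z[q]/(M).  Over C, M is the product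
   of (x - zeta)^k over the primitive n-th roots of unity zeta, so M divides X iff the first k
   Taylor coefficients of X vanish at every such zeta.  The chain rule for X(q^b) at zeta expresses
   these coefficients triangularly through those of X at zeta^b, which is again primitive because
   b is prime to n; hence q |-> q^b preserves (M) and induces F_b on E.
   In the coordinates E = Z^N given by the basis 1, q, ..., q^(N-1), F_b is an integer matrix Frob.
   The same chain rule gives the matrix identity  Tay * Frob = Tri * (Tay with permuted rows),
   where Tay (the Taylor functionals on monomials) is invertible and Tri is block triangular with
   diagonal entries (b zeta^(b-1))^j; taking absolute values, |det Frob| = b^(k(k-1)phi(n)/2).
   Finally, the index of a full-rank integer lattice is |det| (proved by column reduction), which
   gives the index of F_b(E) in E, and the images of the monomials form a basis of F_b(E). *)

section \<open>The index of a full-rank integer lattice\<close>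

definition lat :: "int mat \<Rightarrow> int vec set" where
  "lat A = {A *\<^sub>v c | c. c \<in> carrier_vec (dim_col A)}"

definition reps :: "nat \<Rightarrow> int mat \<Rightarrow> int vec set \<Rightarrow> bool" where
  "reps n A R \<longleftrightarrow> R \<subseteq> carrier_vec n \<and> (\<forall>v\<in>carrier_vec n. \<exists>r\<in>R. v - r \<in> lat A)
     \<and> (\<forall>r1\<in>R. \<forall>r2\<in>R. r1 - r2 \<in> lat A \<longrightarrow> r1 = r2)"

definition index_is_det :: "nat \<Rightarrow> int mat \<Rightarrow> bool" where
  "index_is_det n A \<longleftrightarrow> (\<exists>R. finite R \<and> card R = nat \<bar>det A\<bar> \<and> reps n A R)"

lemma lat_mult_vec: "A \<in> carrier_mat n m \<Longrightarrow> c \<in> carrier_vec m \<Longrightarrow> A *\<^sub>v c \<in> lat A"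
  unfolding lat_def by auto

lemma lat_diff:
  assumes A: "A \<in> carrier_mat n m" and "x \<in> lat A" "y \<in> lat A"
  shows "x - y \<in> lat A"
proof -
  from assms obtain c d where c: "c \<in> carrier_vec m" "x = A *\<^sub>v c"
    and d: "d \<in> carrier_vec m" "y = A *\<^sub>v d" unfolding lat_def by auto
  have "x - y = A *\<^sub>v (c - d)" using c d A by (simp add: mult_minus_distrib_mat_vec)
  thus ?thesis using c d A by (simp add: lat_mult_vec)
qed

lemma lat_unimod:
  assumes A: "A \<in> carrier_mat n n" and E: "E \<in> carrier_mat n n"
    and dE: "det E = 1 \<or> det E = -1"
  shows "lat (A * E) = lat A"
proof
  show "lat (A * E) \<subseteq> lat A"
  proof
    fix x assume "x \<in> lat (A * E)"
    then obtain c where c: "c \<in> carrier_vec n" "x = A * E *\<^sub>v c" using A E unfolding lat_def by auto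
    hence "x = A *\<^sub>v (E *\<^sub>v c)" using A E by (simp add: assoc_mult_mat_vec)
    thus "x \<in> lat A" using c E A by (simp add: lat_mult_vec)
  qed
next
  show "lat A \<subseteq> lat (A * E)"
  proof
    fix x assume "x \<in> lat A"
    then obtain c where c: "c \<in> carrier_vec n" "x = A *\<^sub>v c" using A unfolding lat_def by auto
    define E' where "E' = det E \<cdot>\<^sub>m adj_mat E"
    have E': "E' \<in> carrier_mat n n" unfolding E'_def using adj_mat[OF E] by auto
    have "E * E' = (det E * det E) \<cdot>\<^sub>m 1\<^sub>m n" unfolding E'_def using adj_mat[OF E] E
      by (auto simp: mult_smult_distrib intro!: eq_matI)
    also have "det E * det E = 1" using dE by auto
    finally have EE: "E * E' = 1\<^sub>m n" by (auto intro!: eq_matI)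
    have "A * E *\<^sub>v (E' *\<^sub>v c) = A *\<^sub>v ((E * E') *\<^sub>v c)" using A E E' c
      by (simp add: assoc_mult_mat_vec)
    also have "\<dots> = x" using EE c by simp
    finally show "x \<in> lat (A * E)" using lat_mult_vec[of "A * E" n n "E' *\<^sub>v c"] E' c A E by simp
  qed
qed

lemma index_is_det_unimod:
  assumes A: "A \<in> carrier_mat n n" and E: "E \<in> carrier_mat n n"
    and dE: "det E = 1 \<or> det E = -1" and AE: "index_is_det n (A * E)"
  shows "index_is_det n A"
proof -
  have "\<bar>det (A * E)\<bar> = \<bar>det A\<bar>" using dE by (auto simp: det_mult[OF A E])
  thus ?thesis using AE lat_unimod[OF A E dE] unfolding index_is_det_def reps_def by simp
qed

definition vtl :: "'a vec \<Rightarrow> 'a vec" where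
  "vtl v = vec (dim_vec v - 1) (\<lambda>i. v $ Suc i)"

lemma vtl_carrier[simp]: "v \<in> carrier_vec (Suc n) \<Longrightarrow> vtl v \<in> carrier_vec n"
  unfolding vtl_def by auto

lemma vCons_vtl: "v \<in> carrier_vec (Suc n) \<Longrightarrow> vCons (v $ 0) (vtl v) = v"
  by (rule eq_vecI, auto simp: vCons_def vtl_def split: nat.splits)

lemma vCons_carrier[simp]: "x \<in> carrier_vec n \<Longrightarrow> vCons a x \<in> carrier_vec (Suc n)"
  unfolding vCons_def carrier_vec_def by auto

lemma vCons_minus: "x \<in> carrier_vec n \<Longrightarrow> y \<in> carrier_vec n \<Longrightarrow>
   vCons (a :: 'a :: ab_group_add) x - vCons b y = vCons (a - b) (x - y)"
  by (rule eq_vecI, auto simp: vCons_def split: nat.splits)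

lemma vCons_inj:
  assumes x: "x \<in> carrier_vec n" and y: "y \<in> carrier_vec n" and e: "vCons a x = vCons b y"
  shows "a = b \<and> x = y"
proof
  show "a = b" using arg_cong[OF e, of "\<lambda>v. v $ 0"] by simp
  show "x = y"
  proof (rule eq_vecI)
    fix i assume "i < dim_vec y"
    thus "x $ i = y $ i" using arg_cong[OF e, of "\<lambda>v. v $ Suc i"] by simp
  qed (use x y in auto)
qed

lemma mult_vCons:
  assumes A: "(A :: 'a :: comm_ring_1 mat) \<in> carrier_mat (Suc n) (Suc n)"
    and row0: "\<And>j. 0 < j \<Longrightarrow> j < Suc n \<Longrightarrow> A $$ (0,j) = 0"
    and c: "c \<in> carrier_vec n"
  shows "A *\<^sub>v vCons c0 c = vCons (A $$ (0,0) * c0)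
     (c0 \<cdot>\<^sub>v vec n (\<lambda>i. A $$ (Suc i, 0)) + mat_delete A 0 0 *\<^sub>v c)"
proof (rule eq_vecI)
  fix i assume "i < dim_vec (vCons (A $$ (0,0) * c0)
     (c0 \<cdot>\<^sub>v vec n (\<lambda>i. A $$ (Suc i, 0)) + mat_delete A 0 0 *\<^sub>v c))"
  hence i: "i < Suc n" using c A by simp
  have "(A *\<^sub>v vCons c0 c) $ i = (\<Sum>j<Suc n. A $$ (i,j) * vCons c0 c $ j)"
    using A c i by (simp add: scalar_prod_def atLeast0LessThan)
  also have "\<dots> = A $$ (i,0) * c0 + (\<Sum>j<n. A $$ (i, Suc j) * c $ j)"
    unfolding sum.lessThan_Suc_shift using c by (simp add: vCons_def)
  finally have sp: "(A *\<^sub>v vCons c0 c) $ i = A $$ (i,0) * c0 + (\<Sum>j<n. A $$ (i, Suc j) * c $ j)" .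
  show "(A *\<^sub>v vCons c0 c) $ i = vCons (A $$ (0,0) * c0)
     (c0 \<cdot>\<^sub>v vec n (\<lambda>i. A $$ (Suc i, 0)) + mat_delete A 0 0 *\<^sub>v c) $ i"
  proof (cases i)
    case 0
    thus ?thesis using sp row0 by simp
  next
    case (Suc i')
    hence i': "i' < n" using i by simp
    have "(mat_delete A 0 0 *\<^sub>v c) $ i' = (\<Sum>j<n. A $$ (Suc i', Suc j) * c $ j)"
      using A c i' by (simp add: scalar_prod_def atLeast0LessThan mat_delete_def)
    thus ?thesis using sp Suc i' A c by (simp add: mult.commute add.commute)
  qed
qed (insert A c, auto)

lemma det_row0:
  assumes A: "(A :: 'a :: comm_ring_1 mat) \<in> carrier_mat (Suc n) (Suc n)"
    and row0: "\<And>j. 0 < j \<Longrightarrow> j < Suc n \<Longrightarrow> A $$ (0,j) = 0"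
  shows "det A = A $$ (0,0) * det (mat_delete A 0 0)"
proof -
  have "det A = (\<Sum>j<Suc n. A $$ (0,j) * cofactor A 0 j)" by (rule laplace_expansion_row[OF A], simp)
  also have "\<dots> = A $$ (0,0) * cofactor A 0 0" unfolding sum.lessThan_Suc_shift using row0 by simp
  finally show ?thesis by (simp add: cofactor_def)
qed

lemma lat_vCons_iff:
  assumes A: "A \<in> carrier_mat (Suc n) (Suc n)"
    and row0: "\<And>j. 0 < j \<Longrightarrow> j < Suc n \<Longrightarrow> A $$ (0,j) = 0"
    and s: "s \<in> carrier_vec n"
  defines "col0 \<equiv> vec n (\<lambda>i. A $$ (Suc i, 0))"
  shows "vCons t s \<in> lat A \<longleftrightarrow>
    (\<exists>c0. t = A $$ (0,0) * c0 \<and> s - c0 \<cdot>\<^sub>v col0 \<in> lat (mat_delete A 0 0))"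
proof
  assume "vCons t s \<in> lat A"
  then obtain c where c: "c \<in> carrier_vec (Suc n)" "vCons t s = A *\<^sub>v c" using A unfolding lat_def by auto
  have A': "mat_delete A 0 0 \<in> carrier_mat n n" using mat_delete_carrier[OF A] by simp
  have "vCons t s = A *\<^sub>v vCons (c $ 0) (vtl c)" using c vCons_vtl by metis
  also have "\<dots> = vCons (A $$ (0,0) * c $ 0) (c $ 0 \<cdot>\<^sub>v col0 + mat_delete A 0 0 *\<^sub>v vtl c)"
    unfolding col0_def by (rule mult_vCons[OF A row0 vtl_carrier[OF c(1)]])
  finally have "t = A $$ (0,0) * c $ 0" and "s = c $ 0 \<cdot>\<^sub>v col0 + mat_delete A 0 0 *\<^sub>v vtl c"
    using vCons_inj[OF s, of "c $ 0 \<cdot>\<^sub>v col0 + mat_delete A 0 0 *\<^sub>v vtl c"] c A' col0_def by auto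
  moreover have "s - c $ 0 \<cdot>\<^sub>v col0 = mat_delete A 0 0 *\<^sub>v vtl c"
    using calculation(2) vtl_carrier[OF c(1)] A' by (intro eq_vecI) (auto simp: col0_def)
  ultimately show "\<exists>c0. t = A $$ (0,0) * c0 \<and> s - c0 \<cdot>\<^sub>v col0 \<in> lat (mat_delete A 0 0)"
    using lat_mult_vec[OF A', of "vtl c"] c by auto
next
  assume "\<exists>c0. t = A $$ (0,0) * c0 \<and> s - c0 \<cdot>\<^sub>v col0 \<in> lat (mat_delete A 0 0)"
  then obtain c0 c where t: "t = A $$ (0,0) * c0" and c: "c \<in> carrier_vec n"
    and sc: "s - c0 \<cdot>\<^sub>v col0 = mat_delete A 0 0 *\<^sub>v c" using A unfolding lat_def by auto
  have "s = c0 \<cdot>\<^sub>v col0 + (s - c0 \<cdot>\<^sub>v col0)" using s by (intro eq_vecI) (auto simp: col0_def)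
  hence "s = c0 \<cdot>\<^sub>v col0 + mat_delete A 0 0 *\<^sub>v c" unfolding sc .
  hence "A *\<^sub>v vCons c0 c = vCons t s" unfolding t col0_def by (simp add: mult_vCons[OF A row0 c])
  thus "vCons t s \<in> lat A" using lat_mult_vec[OF A, of "vCons c0 c"] c by simp
qed

context
  fixes A :: "int mat" and n :: nat and R' :: "int vec set"
  assumes A: "A \<in> carrier_mat (Suc n) (Suc n)"
    and row0: "\<And>j. 0 < j \<Longrightarrow> j < Suc n \<Longrightarrow> A $$ (0,j) = 0"
    and a: "A $$ (0,0) \<noteq> 0"
    and R': "reps n (mat_delete A 0 0) R'"
begin

lemma reps_vCons_complete:
  assumes v: "v \<in> carrier_vec (Suc n)"
  shows "\<exists>t r. t \<in> {0..<\<bar>A $$ (0,0)\<bar>} \<and> r \<in> R' \<and> v - vCons t r \<in> lat A"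
proof -
  define col0 where "col0 = vec n (\<lambda>i. A $$ (Suc i, 0))"
  define t where "t = v $ 0 mod \<bar>A $$ (0,0)\<bar>"
  define c0 where "c0 = (v $ 0 - t) div A $$ (0,0)"
  have col0: "col0 \<in> carrier_vec n" unfolding col0_def by simp
  have t: "t \<in> {0..<\<bar>A $$ (0,0)\<bar>}" unfolding t_def using a by auto
  have "A $$ (0,0) dvd v $ 0 - t" unfolding t_def by (simp add: minus_mod_eq_mult_div)
  hence ac0: "v $ 0 - t = A $$ (0,0) * c0" unfolding c0_def by simp
  from R' obtain r where r: "r \<in> R'" "(vtl v - c0 \<cdot>\<^sub>v col0) - r \<in> lat (mat_delete A 0 0)"
    using v col0 unfolding reps_def by force
  have rc: "r \<in> carrier_vec n" using r R' unfolding reps_def by auto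
  have "(vtl v - r) - c0 \<cdot>\<^sub>v col0 = (vtl v - c0 \<cdot>\<^sub>v col0) - r"
    using v rc col0 by (intro eq_vecI) auto
  hence "vCons (v $ 0 - t) (vtl v - r) \<in> lat A"
    using lat_vCons_iff[OF A row0, of "vtl v - r"] ac0 r(2) v rc unfolding col0_def by auto
  moreover have "vCons (v $ 0 - t) (vtl v - r) = v - vCons t r"
    using vCons_minus[of "vtl v" n r "v $ 0" t] v rc vCons_vtl[OF v] by simp
  ultimately show ?thesis using t r(1) by auto
qed

lemma reps_vCons_irredundant:
  assumes t: "t1 \<in> {0..<\<bar>A $$ (0,0)\<bar>}" "t2 \<in> {0..<\<bar>A $$ (0,0)\<bar>}" and s: "s1 \<in> R'" "s2 \<in> R'"
    and diff: "vCons t1 s1 - vCons t2 s2 \<in> lat A"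
  shows "t1 = t2 \<and> s1 = s2"
proof -
  define col0 where "col0 = vec n (\<lambda>i. A $$ (Suc i, 0))"
  have col0: "col0 \<in> carrier_vec n" unfolding col0_def by simp
  have sc: "s1 \<in> carrier_vec n" "s2 \<in> carrier_vec n" using s R' unfolding reps_def by auto
  have "vCons (t1 - t2) (s1 - s2) \<in> lat A" using diff vCons_minus[OF sc] by simp
  then obtain c0 where c0: "t1 - t2 = A $$ (0,0) * c0" "(s1 - s2) - c0 \<cdot>\<^sub>v col0 \<in> lat (mat_delete A 0 0)"
    using lat_vCons_iff[OF A row0] sc unfolding col0_def by auto
  have "\<bar>A $$ (0,0)\<bar> * \<bar>c0\<bar> < \<bar>A $$ (0,0)\<bar> * 1" using t c0(1) by (auto simp: abs_mult)
  hence "c0 = 0" using a by (simp add: mult_less_cancel_left_pos)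
  moreover have "(s1 - s2) - 0 \<cdot>\<^sub>v col0 = s1 - s2" using sc col0 by (intro eq_vecI) auto
  ultimately have "t1 = t2" "s1 - s2 \<in> lat (mat_delete A 0 0)" using c0 by auto
  moreover have "s1 = s2" using R' s \<open>s1 - s2 \<in> lat (mat_delete A 0 0)\<close> unfolding reps_def by blast
  ultimately show ?thesis by simp
qed

lemma reps_vCons: "reps (Suc n) A ((\<lambda>(t,r). vCons t r) ` ({0..<\<bar>A $$ (0,0)\<bar>} \<times> R'))"
  unfolding reps_def
proof (intro conjI ballI impI)
  show "(\<lambda>(t,r). vCons t r) ` ({0..<\<bar>A $$ (0,0)\<bar>} \<times> R') \<subseteq> carrier_vec (Suc n)"
    using R' unfolding reps_def by auto
  fix v :: "int vec" assume "v \<in> carrier_vec (Suc n)"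
  thus "\<exists>r\<in>(\<lambda>(t,r). vCons t r) ` ({0..<\<bar>A $$ (0,0)\<bar>} \<times> R'). v - r \<in> lat A"
    using reps_vCons_complete by fast
next
  fix r1 r2 :: "int vec" assume "r1 \<in> (\<lambda>(t,r). vCons t r) ` ({0..<\<bar>A $$ (0,0)\<bar>} \<times> R')"
    "r2 \<in> (\<lambda>(t,r). vCons t r) ` ({0..<\<bar>A $$ (0,0)\<bar>} \<times> R')" "r1 - r2 \<in> lat A"
  thus "r1 = r2" using reps_vCons_irredundant by auto
qed

end

lemma index_is_det_block:
  assumes A: "A \<in> carrier_mat (Suc n) (Suc n)"
    and row0: "\<And>j. 0 < j \<Longrightarrow> j < Suc n \<Longrightarrow> A $$ (0,j) = 0"
    and d: "det A \<noteq> 0" and minor: "index_is_det n (mat_delete A 0 0)"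
  shows "index_is_det (Suc n) A"
proof -
  define a where "a = A $$ (0,0)"
  have dA: "det A = a * det (mat_delete A 0 0)" unfolding a_def by (rule det_row0[OF A row0])
  with d have a: "a \<noteq> 0" by auto
  from minor obtain R' where R': "finite R'" "card R' = nat \<bar>det (mat_delete A 0 0)\<bar>"
    "reps n (mat_delete A 0 0) R'" unfolding index_is_det_def by blast
  define R where "R = (\<lambda>(t,r). vCons t r) ` ({0..<\<bar>a\<bar>} \<times> R')"
  have R'c: "R' \<subseteq> carrier_vec n" using R'(3) unfolding reps_def by blast
  have "inj_on (\<lambda>(t,r). vCons t r) ({0..<\<bar>a\<bar>} \<times> R')"
  proof (rule inj_onI, clarify)
    fix t1 s1 t2 s2 assume "s1 \<in> R'" "s2 \<in> R'" "vCons t1 s1 = vCons t2 s2"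
    thus "t1 = t2 \<and> s1 = s2" using vCons_inj[of s1 n s2] R'c by blast
  qed
  hence "card R = nat \<bar>a\<bar> * card R'" unfolding R_def by (simp add: card_image card_cartesian_product)
  also have "\<dots> = nat \<bar>det A\<bar>" unfolding R'(2) dA by (simp add: abs_mult nat_mult_distrib)
  finally have card: "card R = nat \<bar>det A\<bar>" .
  have "reps (Suc n) A R" unfolding R_def a_def by (rule reps_vCons[OF A row0 a[unfolded a_def] R'(3)])
  moreover have "finite R" unfolding R_def using R'(1) by simp
  ultimately show ?thesis unfolding index_is_det_def using card by blast
qed

text \<open>The sum of the absolute values of the first row; a Euclidean column step decreases it.\<close>
definition row0_weight :: "int mat \<Rightarrow> nat" where
  "row0_weight A = (\<Sum>j<dim_col A. nat \<bar>A $$ (0,j)\<bar>)"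

lemma euclid_step:
  fixes x y :: int
  assumes "x \<noteq> 0" "y \<noteq> 0" "\<bar>x\<bar> \<le> \<bar>y\<bar>"
  shows "\<bar>(if (x > 0) = (y > 0) then -1 else 1) * x + y\<bar> < \<bar>y\<bar>"
  using assms by (cases "x > 0"; cases "y > 0"; auto)

lemma euclid_column_step:
  assumes A: "A \<in> carrier_mat (Suc n) (Suc n)" and ij: "i < Suc n" "j < Suc n" "i \<noteq> j"
    and nz: "A $$ (0,i) \<noteq> 0" "A $$ (0,j) \<noteq> 0" and le: "\<bar>A $$ (0,i)\<bar> \<le> \<bar>A $$ (0,j)\<bar>"
  shows "\<exists>E\<in>carrier_mat (Suc n) (Suc n). det E = 1 \<and> row0_weight (A * E) < row0_weight A"
proof -
  define s :: int where "s = (if (A $$ (0,i) > 0) = (A $$ (0,j) > 0) then -1 else 1)"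
  define E where "E = addrow_mat (Suc n) s i j"
  have AE: "A * E = addcol s j i A" unfolding E_def by (rule addcol_mat[OF A ij(1), symmetric])
  have E: "E \<in> carrier_mat (Suc n) (Suc n)" by (simp add: E_def addrow_mat_def)
  have dE: "det E = 1" unfolding E_def by (rule det_addrow_mat, use ij in auto)
  have step: "\<bar>(A * E) $$ (0,j)\<bar> < \<bar>A $$ (0,j)\<bar>"
    using euclid_step[OF nz le] A ij unfolding AE s_def by simp
  have "row0_weight (A * E) = (\<Sum>l<Suc n. nat \<bar>(A * E) $$ (0,l)\<bar>)"
    unfolding row0_weight_def using A E by simp
  also have "\<dots> < (\<Sum>l<Suc n. nat \<bar>A $$ (0,l)\<bar>)"
  proof (rule sum_strict_mono_ex1)
    show "\<forall>l\<in>{..<Suc n}. nat \<bar>(A * E) $$ (0,l)\<bar> \<le> nat \<bar>A $$ (0,l)\<bar>"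
      using step A unfolding AE by auto
    show "\<exists>l\<in>{..<Suc n}. nat \<bar>(A * E) $$ (0,l)\<bar> < nat \<bar>A $$ (0,l)\<bar>"
      using step ij by (intro bexI[of _ j]) auto
  qed simp
  also have "\<dots> = row0_weight A" unfolding row0_weight_def using A by simp
  finally show ?thesis using E dE by blast
qed

lemma column_to_front:
  fixes A :: "int mat"
  assumes A: "A \<in> carrier_mat (Suc n) (Suc n)" and j: "j < Suc n"
    and zero: "\<And>l. l < Suc n \<Longrightarrow> l \<noteq> j \<Longrightarrow> A $$ (0,l) = 0"
  shows "\<exists>E\<in>carrier_mat (Suc n) (Suc n). (det E = 1 \<or> det E = -1) \<and>
    (\<forall>l. 0 < l \<longrightarrow> l < Suc n \<longrightarrow> (A * E) $$ (0,l) = 0)"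
proof (cases "j = 0")
  case True
  thus ?thesis using A zero by (intro bexI[of _ "1\<^sub>m (Suc n)"]) auto
next
  case False
  define E :: "int mat" where "E = swaprows_mat (Suc n) 0 j"
  have AE: "A * E = swapcols 0 j A" unfolding E_def by (rule swapcols_mat[OF A, symmetric], use j in auto)
  have "det E = -1" unfolding E_def by (rule det_swaprows_mat, use j False in auto)
  moreover have "E \<in> carrier_mat (Suc n) (Suc n)" by (simp add: E_def swaprows_mat_def)
  moreover have "(A * E) $$ (0,l) = 0" if "0 < l" "l < Suc n" for l
    using that A zero False unfolding AE by auto
  ultimately show ?thesis by blast
qed

lemma index_is_det_single_entry:
  assumes IH: "\<And>B. B \<in> carrier_mat n n \<Longrightarrow> det B \<noteq> 0 \<Longrightarrow> index_is_det n B"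
    and A: "A \<in> carrier_mat (Suc n) (Suc n)" and d: "det A \<noteq> 0" and j: "j < Suc n"
    and zero: "\<And>l. l < Suc n \<Longrightarrow> l \<noteq> j \<Longrightarrow> A $$ (0,l) = 0"
  shows "index_is_det (Suc n) A"
proof -
  from column_to_front[OF A j zero] obtain E where E: "E \<in> carrier_mat (Suc n) (Suc n)"
    "det E = 1 \<or> det E = -1" and row0: "\<And>l. 0 < l \<Longrightarrow> l < Suc n \<Longrightarrow> (A * E) $$ (0,l) = 0"
    by blast
  have AE: "A * E \<in> carrier_mat (Suc n) (Suc n)" using A E by simp
  have dAE: "det (A * E) \<noteq> 0" using d E by (auto simp: det_mult[OF A])
  hence "det (mat_delete (A * E) 0 0) \<noteq> 0" using det_row0[OF AE row0] by auto
  hence minor: "index_is_det n (mat_delete (A * E) 0 0)" using IH mat_delete_carrier[OF AE] by simp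
  have "index_is_det (Suc n) (A * E)" by (rule index_is_det_block[OF AE row0 dAE minor])
  thus ?thesis by (rule index_is_det_unimod[OF A E])
qed

text \<open>Induction step in general: Euclid's algorithm on the first row, by induction on its weight.\<close>
lemma index_is_det_Suc:
  assumes IH: "\<And>B. B \<in> carrier_mat n n \<Longrightarrow> det B \<noteq> 0 \<Longrightarrow> index_is_det n B"
  shows "A \<in> carrier_mat (Suc n) (Suc n) \<Longrightarrow> det A \<noteq> 0 \<Longrightarrow> index_is_det (Suc n) A"
proof (induction "row0_weight A" arbitrary: A rule: less_induct)
  case less
  note A = less.prems(1) and d = less.prems(2)
  define Z where "Z = {j. j < Suc n \<and> A $$ (0,j) \<noteq> 0}"
  show ?case
  proof (cases "\<exists>i\<in>Z. \<exists>j\<in>Z. i \<noteq> j")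
    case True
    then obtain i0 j0 where ij0: "i0 \<in> Z" "j0 \<in> Z" "i0 \<noteq> j0" by blast
    obtain i j where "i \<in> Z" "j \<in> Z" "i \<noteq> j" "\<bar>A $$ (0,i)\<bar> \<le> \<bar>A $$ (0,j)\<bar>"
      using ij0 that[of i0 j0] that[of j0 i0] by (cases "\<bar>A $$ (0,i0)\<bar> \<le> \<bar>A $$ (0,j0)\<bar>") auto
    with euclid_column_step[OF A] obtain E where E: "E \<in> carrier_mat (Suc n) (Suc n)" "det E = 1"
      and w: "row0_weight (A * E) < row0_weight A" unfolding Z_def by blast
    have "det (A * E) \<noteq> 0" using d E by (simp add: det_mult[OF A])
    hence "index_is_det (Suc n) (A * E)" using less.hyps[OF w] A E by simp
    thus ?thesis using index_is_det_unimod[OF A E(1)] E(2) by simp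
  next
    case False
    have "Z \<noteq> {}"
    proof
      assume "Z = {}"
      hence "det A = 0" using laplace_expansion_row[OF A, of 0] unfolding Z_def by simp
      with d show False ..
    qed
    then obtain j where j: "j < Suc n" and zero: "\<And>l. l < Suc n \<Longrightarrow> l \<noteq> j \<Longrightarrow> A $$ (0,l) = 0"
      using False unfolding Z_def by blast
    show ?thesis by (rule index_is_det_single_entry[OF IH A d j zero])
  qed
qed

theorem lattice_index:
  "A \<in> carrier_mat n n \<Longrightarrow> det A \<noteq> 0 \<Longrightarrow> index_is_det n A"
proof (induction n arbitrary: A)
  case 0
  have "v = 0\<^sub>v 0" if "v \<in> carrier_vec 0" for v :: "int vec" using that by (intro eq_vecI) auto
  moreover have "A *\<^sub>v 0\<^sub>v 0 = 0\<^sub>v 0" using "0.prems"(1) by auto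
  hence "0\<^sub>v 0 \<in> lat A" using lat_mult_vec[OF "0.prems"(1), of "0\<^sub>v 0"] by simp
  ultimately have "reps 0 A {0\<^sub>v 0}" unfolding reps_def by auto
  moreover have "det A = 1" using "0.prems"(1) by simp
  ultimately show ?case unfolding index_is_det_def by (intro exI[of _ "{0\<^sub>v 0}"]) auto
next
  case (Suc n)
  thus ?case using index_is_det_Suc[OF Suc.IH] by blast
qed

section \<open>Roots of unity and the cyclotomic polynomial\<close>

text \<open>The \<open>n\<close>-th roots of unity \<open>\<omega>\<^sub>n\<^sup>j\<close>, and the complex product over the primitive ones,
  which is the image of \<open>cyclo n\<close> in \<open>\<complex>[x]\<close>.\<close>
definition unit_root :: "nat \<Rightarrow> nat \<Rightarrow> complex" where
  "unit_root n j = cis (2 * pi * real j / real n)"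

definition prim_exps :: "nat \<Rightarrow> nat set" where
  "prim_exps n = {j. j < n \<and> coprime j n}"

definition cyclo_C :: "nat \<Rightarrow> complex poly" where
  "cyclo_C n = (\<Prod>j\<in>prim_exps n. [:- unit_root n j, 1:])"

lemma finite_prim_exps[simp]: "finite (prim_exps n)"
  unfolding prim_exps_def by auto

lemma card_prim_exps: assumes "n > 0" shows "card (prim_exps n) = totient n"
proof (cases "n = 1")
  case True
  have "prim_exps 1 = {0}" unfolding prim_exps_def by auto
  thus ?thesis using True by simp
next
  case False
  hence "prim_exps n = totatives n"
    unfolding prim_exps_def totatives_def using assms by (auto simp: le_less intro: Nat.gr0I)
  thus ?thesis by (simp add: totient_def)
qed

lemma unit_root_power: "unit_root n a ^ b = unit_root n (a * b)"
  unfolding unit_root_def DeMoivre by (simp add: field_simps)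

lemma unit_root_mod: assumes "n > 0" shows "unit_root n (a mod n) = unit_root n a"
proof -
  have "real a = real (a mod n) + real n * real (a div n)"
    using mod_mult_div_eq[of a n] by (simp flip: of_nat_mult of_nat_add)
  hence arg: "2 * pi * real a / real n = 2 * pi * real (a mod n) / real n + 2 * pi * real (a div n)"
    using assms by (simp add: field_simps)
  have "unit_root n a = unit_root n (a mod n) * cis (2 * pi * real (a div n))"
    unfolding unit_root_def by (simp only: cis_mult arg)
  thus ?thesis by simp
qed

lemma unit_root_pow_n: assumes "n > 0" shows "unit_root n a ^ n = 1"
  using unit_root_mod[OF assms, of "a * n"] unfolding unit_root_power by (simp add: unit_root_def)

lemma unit_root_inj: assumes "a < n" "b < n" "unit_root n a = unit_root n b" shows "a = b"
  using bij_betw_roots_unity[of n] assms unfolding bij_betw_def inj_on_def unit_root_def by auto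

lemma linear_prod_dvd:
  fixes p :: "'a :: idom poly"
  assumes "finite S" "p \<noteq> 0" "\<forall>s\<in>S. [:-s,1:]^k dvd p"
  shows "(\<Prod>s\<in>S. [:-s,1:]^k) dvd p"
  using assms
proof (induction S rule: finite_induct)
  case empty thus ?case by simp
next
  case (insert a S)
  from insert.IH[OF insert.prems(1)] insert.prems(2)
  obtain q where q: "p = (\<Prod>s\<in>S. [:-s,1:]^k) * q" by (auto elim: dvdE)
  have P0: "poly (\<Prod>s\<in>S. [:-s,1:]^k) a \<noteq> 0" using insert.hyps
    by (auto simp: poly_prod prod_zero_iff)
  hence Pn0: "(\<Prod>s\<in>S. [:-s,1:]^k) \<noteq> 0" by auto
  have q0: "q \<noteq> 0" using q insert.prems(1) by auto
  have "k \<le> order a p" using insert.prems by (simp add: order_divides)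
  also have "order a p = order a (\<Prod>s\<in>S. [:-s,1:]^k) + order a q"
    unfolding q by (rule order_mult, use Pn0 q0 in simp)
  also have "order a (\<Prod>s\<in>S. [:-s,1:]^k) = 0" by (rule order_0I[OF P0])
  finally have "[:-a,1:]^k dvd q" using q0 by (simp add: order_divides)
  hence "(\<Prod>s\<in>S. [:-s,1:]^k) * [:-a,1:]^k dvd p" unfolding q by (simp add: mult_dvd_mono)
  thus ?case using insert.hyps by (simp add: mult.commute)
qed

text \<open>\<open>x\<^sup>n - 1\<close> is the product of the \<open>x - \<omega>\<^sub>n\<^sup>j\<close>, \<open>j < n\<close>: the product divides \<open>x\<^sup>n - 1\<close>
  (distinct roots), and both are monic of degree \<open>n\<close>.\<close>
lemma xn_minus_1:
  assumes n: "n > 0"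
  shows "monom (1::complex) n - 1 = (\<Prod>j<n. [:- unit_root n j, 1:])"
proof -
  define X where "X = monom (1::complex) n - 1"
  define P where "P = (\<Prod>j<n. [:- unit_root n j, 1:])"
  have inj: "inj_on (unit_root n) {..<n}" using unit_root_inj by (auto simp: inj_on_def)
  have cX: "coeff X n = 1" unfolding X_def using n by simp
  hence X0: "X \<noteq> 0" by auto
  have "P = (\<Prod>s\<in>unit_root n ` {..<n}. [:-s,1:]^1)" unfolding P_def by (simp add: prod.reindex[OF inj])
  also have "\<dots> dvd X"
  proof (rule linear_prod_dvd[OF _ X0])
    show "\<forall>s\<in>unit_root n ` {..<n}. [:- s, 1:] ^ 1 dvd X"
      using unit_root_pow_n[OF n] by (auto simp: X_def poly_eq_0_iff_dvd[symmetric] poly_monom)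
  qed simp
  finally obtain q where q: "X = P * q" by (elim dvdE)
  have dP: "degree P = n" unfolding P_def by (subst degree_prod_eq_sum_degree, auto)
  have lP: "lead_coeff P = 1" unfolding P_def by (simp add: lead_coeff_prod)
  have "degree X \<le> n" unfolding X_def by (rule degree_diff_le, auto simp: degree_monom_le)
  hence dX: "degree X = n" using cX le_degree[of X n] by simp
  have q0: "q \<noteq> 0" and P0: "P \<noteq> 0" using q X0 by auto
  have "degree X = degree P + degree q" unfolding q by (rule degree_mult_eq[OF P0 q0])
  hence dq: "degree q = 0" using dP dX by simp
  have "lead_coeff X = lead_coeff P * lead_coeff q" unfolding q by (simp add: lead_coeff_mult)
  hence "coeff q 0 = 1" using lP cX dX dq by simp
  hence "q = 1" using dq by (metis degree_0_id one_pCons)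
  thus ?thesis using q unfolding X_def P_def by simp
qed

text \<open>Every exponent \<open>i < n\<close> is uniquely \<open>j * (n div d)\<close> with \<open>d dvd n\<close>, \<open>j < d\<close>, \<open>coprime j d\<close>
  (namely \<open>n div d = gcd i n\<close>): each \<open>n\<close>-th root of unity is a primitive \<open>d\<close>-th one for
  exactly one divisor \<open>d\<close>.\<close>
lemma gcd_mult_div:
  fixes d j n :: nat
  assumes "d dvd n" "coprime j d"
  shows "gcd (j * (n div d)) n = n div d"
proof -
  have "gcd (j * (n div d)) n = gcd ((n div d) * j) ((n div d) * d)"
    using assms(1) by (simp add: mult.commute)
  also have "\<dots> = (n div d) * gcd j d" by (simp add: gcd_mult_distrib_nat)
  also have "gcd j d = 1" using assms(2) by simp
  finally show ?thesis by simp
qed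

lemma divisor_exps_bij:
  assumes n: "n > 0"
  shows "bij_betw (\<lambda>(d,j). j * (n div d)) (SIGMA d:{d. d dvd n}. prim_exps d) {..<n}"
proof (rule bij_betwI')
  have pos: "n div d > 0" if "d dvd n" for d
    using that n by (simp add: div_greater_zero_iff dvd_imp_le dvd_pos_nat)
  fix x y assume x: "x \<in> (SIGMA d:{d. d dvd n}. prim_exps d)" and y: "y \<in> (SIGMA d:{d. d dvd n}. prim_exps d)"
  obtain d j d' j' where xy: "x = (d,j)" "y = (d',j')" by (cases x, cases y)
  show "((\<lambda>(d,j). j * (n div d)) x = (\<lambda>(d,j). j * (n div d)) y) = (x = y)"
  proof
    assume e: "(\<lambda>(d,j). j * (n div d)) x = (\<lambda>(d,j). j * (n div d)) y"
    have dn: "d dvd n" "d' dvd n" using x y xy by auto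
    have "n div d = n div d'" using gcd_mult_div[of d n j] gcd_mult_div[of d' n j'] x y e xy
      by (auto simp: prim_exps_def)
    moreover have "d * (n div d) = d' * (n div d')" using dn by simp
    ultimately have "d = d'" using pos[OF dn(1)] by simp
    moreover have "j = j'" using e xy pos[OF dn(1)] \<open>d = d'\<close> by simp
    ultimately show "x = y" using xy by simp
  qed simp
next
  fix x assume x: "x \<in> (SIGMA d:{d. d dvd n}. prim_exps d)"
  obtain d j where xe: "x = (d,j)" by (cases x)
  have d: "d dvd n" and j: "j < d" using x xe by (auto simp: prim_exps_def)
  have "n div d > 0" using d n by (simp add: div_greater_zero_iff dvd_imp_le dvd_pos_nat)
  hence "j * (n div d) < d * (n div d)" using j by simp
  thus "(\<lambda>(d,j). j * (n div d)) x \<in> {..<n}" using d xe by simp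
next
  fix i assume i: "i \<in> {..<n}"
  define g where "g = gcd i n"
  have g: "g > 0" unfolding g_def using n by simp
  define d where "d = n div g"
  define j where "j = i div g"
  have nd: "n = d * g" and ij: "i = j * g" unfolding d_def j_def g_def by auto
  have "j * g < d * g" using i nd ij by simp
  hence jd: "j < d" using g by simp
  have "coprime j d" unfolding j_def d_def g_def by (rule div_gcd_coprime, use n in simp)
  moreover have "n div d = g" using nd g n by simp
  ultimately have "(d,j) \<in> (SIGMA d:{d. d dvd n}. prim_exps d)" "i = j * (n div d)"
    using nd ij jd by (auto simp: prim_exps_def)
  thus "\<exists>x\<in>(SIGMA d:{d. d dvd n}. prim_exps d). i = (\<lambda>(d,j). j * (n div d)) x" by force
qed

lemma unit_root_divisor:
  assumes "d dvd n" "n > 0"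
  shows "unit_root n (j * (n div d)) = unit_root d j"
proof -
  have nd: "real n = real d * real (n div d)" using assms(1) by (simp flip: of_nat_mult)
  have "real (n div d) > 0" using assms by (simp add: div_greater_zero_iff dvd_imp_le dvd_pos_nat)
  hence "2 * pi * real (j * (n div d)) / real n = 2 * pi * real j / real d"
    unfolding nd by (simp add: field_simps)
  thus ?thesis unfolding unit_root_def by simp
qed

lemma prod_unit_roots_by_order:
  assumes n: "n > 0"
  shows "(\<Prod>i<n. f (unit_root n i)) = (\<Prod>d | d dvd n. \<Prod>j\<in>prim_exps d. f (unit_root d j))"
proof -
  have "finite {d. d dvd n}" using n by simp
  have "(\<Prod>i<n. f (unit_root n i)) =
      (\<Prod>x\<in>(SIGMA d:{d. d dvd n}. prim_exps d). f (unit_root n ((\<lambda>(d,j). j * (n div d)) x)))"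
    by (rule prod.reindex_bij_betw[OF divisor_exps_bij[OF n], symmetric])
  also have "\<dots> = (\<Prod>x\<in>(SIGMA d:{d. d dvd n}. prim_exps d). f (unit_root (fst x) (snd x)))"
    by (rule prod.cong) (auto simp: unit_root_divisor n)
  also have "\<dots> = (\<Prod>d | d dvd n. \<Prod>j\<in>prim_exps d. f (unit_root d j))"
    using prod.Sigma[of "{d. d dvd n}" prim_exps "\<lambda>d j. f (unit_root d j)"] \<open>finite {d. d dvd n}\<close>
    by (simp add: split_def)
  finally show ?thesis .
qed

lemma xn_minus_1_cyclo_C:
  assumes "n > 0"
  shows "monom (1::complex) n - 1 = (\<Prod>d | d dvd n. cyclo_C d)"
  unfolding xn_minus_1[OF assms] cyclo_C_def by (rule prod_unit_roots_by_order[OF assms])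

lemma lead_coeff_cyclo_C: "lead_coeff (cyclo_C n) = 1"
  unfolding cyclo_C_def by (simp add: lead_coeff_prod)

lemma monic_divmod:
  fixes M p :: "'a :: comm_ring_1 poly"
  assumes M: "lead_coeff M = 1"
  shows "\<exists>q r. p = M * q + r \<and> (r = 0 \<or> degree r < degree M)"
proof -
  have M0: "M \<noteq> 0" using M by auto
  obtain q r where qr: "pseudo_divmod p M = (q, r)" by (cases "pseudo_divmod p M")
  from pseudo_divmod[OF M0 qr] M show ?thesis by auto
qed

lemma monic_dvd_of_int_poly:
  fixes M p :: "int poly"
  assumes M: "lead_coeff M = 1"
    and d: "(of_int_poly M :: complex poly) dvd of_int_poly p"
  shows "M dvd p"
proof -
  obtain q r where qr: "p = M * q + r" "r = 0 \<or> degree r < degree M" using monic_divmod[OF M] by blast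
  have "(of_int_poly r :: complex poly) = of_int_poly p - of_int_poly M * of_int_poly q"
    unfolding qr by (simp add: of_int_poly_hom.hom_add of_int_poly_hom.hom_mult)
  hence dr: "(of_int_poly M :: complex poly) dvd of_int_poly r" using d by simp
  have "r = 0"
  proof (rule ccontr)
    assume r0: "r \<noteq> 0"
    hence "(of_int_poly r :: complex poly) \<noteq> 0" by simp
    from dvd_imp_degree_le[OF dr this] have "degree M \<le> degree r" by simp
    with qr(2) r0 show False by simp
  qed
  thus ?thesis using qr by simp
qed

text \<open>\<open>cyclo_C n\<close> has integer coefficients: by strong induction, it is the quotient of
  \<open>x\<^sup>n - 1\<close> by the product of the \<open>cyclo_C d\<close>, \<open>d\<close> a proper divisor, a monic integer polynomial.\<close>
lemma cyclo_C_int: "n > 0 \<Longrightarrow> \<exists>p. of_int_poly p = cyclo_C n"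
proof (induction n rule: less_induct)
  case (less n)
  define D where "D = {d. d dvd n \<and> d < n}"
  have finD: "finite D" unfolding D_def by simp
  have "\<forall>d\<in>D. \<exists>p. of_int_poly p = cyclo_C d"
    using less.IH less.prems unfolding D_def by (auto intro: Nat.gr0I)
  then obtain f where f: "\<And>d. d \<in> D \<Longrightarrow> of_int_poly (f d) = cyclo_C d" by metis
  define Q where "Q = (\<Prod>d\<in>D. f d)"
  have mQ: "of_int_poly Q = (\<Prod>d\<in>D. cyclo_C d)" unfolding Q_def of_int_poly_hom.hom_prod
    using f by simp
  have "{d. d dvd n} = insert n D" unfolding D_def using less.prems
    by (auto simp: dvd_imp_le le_neq_implies_less)
  hence X: "monom (1::complex) n - 1 = cyclo_C n * of_int_poly Q"
    unfolding xn_minus_1_cyclo_C[OF less.prems] mQ using finD by (simp add: D_def)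
  have "lead_coeff (of_int_poly Q :: complex poly) = 1"
    unfolding mQ by (simp add: lead_coeff_prod lead_coeff_cyclo_C)
  hence lQ: "lead_coeff Q = 1" by simp
  have "(of_int_poly Q :: complex poly) dvd of_int_poly (monom 1 n - 1)"
    using X by (simp add: of_int_poly_hom.hom_minus)
  from monic_dvd_of_int_poly[OF lQ this] obtain q where q: "monom 1 n - 1 = Q * q" by (elim dvdE)
  have "(of_int_poly Q :: complex poly) * of_int_poly q = of_int_poly (monom 1 n - 1)"
    by (simp only: q of_int_poly_hom.hom_mult)
  also have "\<dots> = of_int_poly Q * cyclo_C n"
    using X by (simp add: of_int_poly_hom.hom_minus mult.commute)
  moreover have "(of_int_poly Q :: complex poly) \<noteq> 0" using lQ by auto
  ultimately have "of_int_poly q = cyclo_C n" by simp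
  thus ?case by blast
qed

text \<open>Hence \<open>cyclo n\<close> is well defined, with complex image \<open>cyclo_C n\<close>.\<close>
lemma of_int_poly_cyclo: assumes "n > 0" shows "of_int_poly (cyclo n) = cyclo_C n"
proof -
  obtain p where p: "of_int_poly p = cyclo_C n" using cyclo_C_int[OF assms] by blast
  have "\<exists>!p. (of_int_poly p :: complex poly) = cyclo_C n"
  proof (rule ex1I[of _ p])
    fix p' assume "(of_int_poly p' :: complex poly) = cyclo_C n"
    hence "(of_int_poly p' :: complex poly) = of_int_poly p" using p by simp
    thus "p' = p" by (rule of_int_poly_hom.injectivity)
  qed (rule p)
  thus ?thesis unfolding cyclo_def cyclo_C_def prim_exps_def unit_root_def by (rule theI')
qed

section \<open>Taylor coefficients of polynomials\<close>

text \<open>\<open>tay z p = p(x + z)\<close>; its \<open>j\<close>-th coefficient \<open>tc z j p\<close> is the \<open>j\<close>-th Taylor coefficient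
  \<open>p\<^sup>(\<^sup>j\<^sup>)(z)/j!\<close> of \<open>p\<close> at \<open>z\<close>. Divisibility by \<open>(x - z)\<^sup>k\<close> means that the first \<open>k\<close> of them vanish.\<close>
definition tay :: "'a::comm_ring_1 \<Rightarrow> 'a poly \<Rightarrow> 'a poly" where
  "tay z p = pcompose p [:z, 1:]"

definition tc :: "'a::comm_ring_1 \<Rightarrow> nat \<Rightarrow> 'a poly \<Rightarrow> 'a" where
  "tc z j p = coeff (tay z p) j"

lemma tc_diff: "tc z j (p - q) = tc z j p - tc z j q"
  unfolding tc_def tay_def by (simp add: pcompose_diff)

lemma tc_smult: "tc z j (Polynomial.smult c p) = c * tc z j p"
  unfolding tc_def tay_def by (simp add: pcompose_smult)

lemma tc_sum: "tc z j (sum f A) = (\<Sum>i\<in>A. tc z j (f i))"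
  unfolding tc_def tay_def by (simp add: pcompose_sum coeff_sum)

lemma tc_monom: "tc z j (monom c l) = c * tc z j (monom 1 l)"
  using tc_smult[of z j c "monom 1 l"] by (simp add: smult_monom)

lemma pcompose_monom: "pcompose (monom c i) q = Polynomial.smult c ((q :: 'a :: comm_ring_1 poly) ^ i)"
  by (simp add: monom_altdef pcompose_smult pcompose_hom.hom_power pcompose_pCons)

lemma tay_linear_power: "tay z ([:-z,1:] ^ k) = monom 1 k"
  unfolding tay_def by (simp add: pcompose_hom.hom_power pcompose_pCons monom_altdef)

lemma tay_inverse: "pcompose (tay z p) [:-z, 1:] = p"
proof -
  have "pcompose (tay z p) [:-z, 1:] = pcompose p (pcompose [:z,1:] [:-z,1:])"
    unfolding tay_def by (simp only: pcompose_assoc)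
  also have "pcompose [:z,1:] [:-z,1:] = [:0,1:]" by (simp add: pcompose_pCons)
  finally show ?thesis by simp
qed

lemma tc_dvd:
  assumes "[:-z,1:]^k dvd p" "j < k"
  shows "tc z j p = 0"
proof -
  from assms(1) obtain g where "p = [:-z,1:]^k * g" by (elim dvdE)
  hence "tay z p = monom 1 k * tay z g" unfolding tay_def
    by (simp add: pcompose_mult tay_linear_power[unfolded tay_def])
  thus ?thesis unfolding tc_def using assms(2) by (simp add: coeff_monom_mult)
qed

lemma tc_zero_dvd:
  assumes "\<And>j. j < k \<Longrightarrow> tc z j p = 0"
  shows "[:-z,1:]^k dvd p"
proof -
  have "monom 1 k dvd tay z p" using assms unfolding tc_def monom_1_dvd_iff' by simp
  then obtain h where h: "tay z p = monom 1 k * h" by (elim dvdE)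
  have "p = pcompose (tay z p) [:-z, 1:]" by (simp add: tay_inverse)
  also have "\<dots> = [:-z,1:]^k * pcompose h [:-z,1:]"
    unfolding h by (simp add: pcompose_mult pcompose_monom)
  finally show ?thesis by (metis dvd_triv_left)
qed

lemma tc_pcompose:
  fixes p g :: "'a :: idom poly"
  shows "tc z j (pcompose p g) = (\<Sum>i\<le>j. tc (poly g z) i p * tc z j ((g - [:poly g z:]) ^ i))"
proof -
  define T where "T = tay (poly g z) p"
  define h where "h = g - [:poly g z:]"
  have shift: "pcompose [:- poly g z, 1:] g = h" unfolding h_def by (simp add: pcompose_pCons)
  have "pcompose p g = pcompose (pcompose T [:- poly g z, 1:]) g" unfolding T_def by (simp add: tay_inverse)
  also have "\<dots> = pcompose T h" by (simp only: pcompose_assoc[symmetric] shift)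
  also have "\<dots> = (\<Sum>i\<le>degree T. Polynomial.smult (coeff T i) (h ^ i))"
  proof -
    have "pcompose T h = pcompose (\<Sum>i\<le>degree T. monom (coeff T i) i) h"
      by (simp add: poly_as_sum_of_monoms)
    thus ?thesis by (simp add: pcompose_sum pcompose_monom)
  qed
  finally have "tc z j (pcompose p g) = (\<Sum>i\<le>degree T. coeff T i * tc z j (h ^ i))"
    by (simp add: tc_sum tc_smult)
  also have "\<dots> = (\<Sum>i\<le>max (degree T) j. coeff T i * tc z j (h ^ i))"
    by (rule sum.mono_neutral_left) (auto simp: coeff_eq_0)
  also have "\<dots> = (\<Sum>i\<le>j. coeff T i * tc z j (h ^ i))"
  proof (rule sum.mono_neutral_right)
    show "\<forall>i\<in>{..max (degree T) j} - {..j}. coeff T i * tc z j (h ^ i) = 0"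
    proof
      fix i assume i: "i \<in> {..max (degree T) j} - {..j}"
      have "[:-z,1:] dvd h" unfolding h_def by (simp add: poly_eq_0_iff_dvd[symmetric])
      hence "[:-z,1:]^i dvd h^i" by (rule dvd_power_same)
      hence "tc z j (h ^ i) = 0" by (rule tc_dvd) (use i in simp)
      thus "coeff T i * tc z j (h ^ i) = 0" by simp
    qed
  qed auto
  finally show ?thesis unfolding T_def h_def tc_def by simp
qed

text \<open>The diagonal coefficients of the triangular transformation above, for \<open>g = x\<^sup>b\<close>:
  \<open>x\<^sup>b - z\<^sup>b\<close> vanishes to first order at \<open>z\<close> with leading Taylor coefficient \<open>b z\<^sup>b\<^sup>-\<^sup>1\<close>.\<close>
lemma tc_power_diag:
  fixes z :: "'a :: idom"
  shows "tc z j ((monom 1 b - [:z^b:]) ^ j) = (of_nat b * z^(b-1))^j"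
proof -
  define w where "w = tay z (monom 1 b - [:z^b:])"
  have w: "w = [:z,1:]^b - [:z^b:]" unfolding w_def tay_def
    by (simp add: pcompose_diff pcompose_monom)
  have w1: "coeff w 1 = of_nat b * z^(b-1)"
  proof (cases "b = 0")
    case False
    hence "coeff ([:z,1:]^b) 1 = of_nat (b choose 1) * 1 ^ 1 * z ^ (b - 1)"
      by (intro coeff_linear_poly_power) simp
    thus ?thesis unfolding w by simp
  qed (simp add: w)
  have "monom 1 1 dvd w" unfolding monom_1_dvd_iff' w by (simp add: coeff_0_power)
  then obtain w' where w': "w = monom 1 1 * w'" by (elim dvdE)
  have cw': "coeff w' 0 = of_nat b * z^(b-1)" using w1 unfolding w' by (simp add: coeff_monom_mult)
  have "tc z j ((monom 1 b - [:z^b:]) ^ j) = coeff (w ^ j) j"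
    unfolding tc_def w_def tay_def by (simp add: pcompose_hom.hom_power)
  also have "w ^ j = monom 1 j * w' ^ j" unfolding w' by (simp add: power_mult_distrib monom_power)
  also have "coeff (monom 1 j * w' ^ j) j = (of_nat b * z^(b-1))^j"
    by (simp add: coeff_monom_mult coeff_0_power cw')
  finally show ?thesis .
qed

definition lincomb :: "int list \<Rightarrow> int poly list \<Rightarrow> int poly" where
  "lincomb c vs = (\<Sum>i<length vs. Polynomial.smult (c ! i) (vs ! i))"

lemma lincomb_diff:
  assumes "length c = length vs" "length c' = length vs"
  shows "lincomb c vs - lincomb c' vs = lincomb (map2 (-) c c') vs"
  unfolding lincomb_def using assms by (simp add: sum_subtractf smult_diff_left)

lemma quot_Z_basisI:
  assumes sub: "set vs \<subseteq> S"
    and span: "\<And>x. x \<in> S \<Longrightarrow> \<exists>c. length c = length vs \<and> M dvd x - lincomb c vs"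
    and indep: "\<And>c. length c = length vs \<Longrightarrow> M dvd lincomb c vs \<Longrightarrow> \<forall>i<length c. c ! i = 0"
  shows "quot_Z_basis M S vs"
  unfolding quot_Z_basis_def lincomb_def[symmetric]
proof (intro conjI ballI sub)
  fix x assume "x \<in> S"
  then obtain c where c: "length c = length vs" "M dvd x - lincomb c vs" using span by blast
  show "\<exists>!c. length c = length vs \<and> M dvd x - lincomb c vs"
  proof (rule ex1I[of _ c])
    fix c' assume c': "length c' = length vs \<and> M dvd x - lincomb c' vs"
    have "M dvd (x - lincomb c vs) - (x - lincomb c' vs)" by (rule dvd_diff) (use c c' in auto)
    hence "M dvd lincomb (map2 (-) c' c) vs" using lincomb_diff[of c' vs c] c c' by simp
    hence "\<forall>i<length vs. c' ! i - c ! i = 0" using indep[of "map2 (-) c' c"] c c' by simp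
    thus "c' = c" using c c' by (auto intro!: nth_equalityI)
  qed (use c in simp)
qed

text \<open>\<open>(r, j) \<mapsto> r * k + j\<close> identifies \<open>{..<d} \<times> {..<k}\<close> with \<open>{..<d * k}\<close>; in the main argument
  \<open>r\<close> indexes a root of unity and \<open>j\<close> the order of a Taylor coefficient.\<close>
lemma block_index_bij:
  fixes d k :: nat
  assumes "k > 0"
  shows "bij_betw (\<lambda>(r,j). r * k + j) ({..<d} \<times> {..<k}) {..<d * k}"
proof (rule bij_betwI')
  have div: "(r * k + j) div k = r" and mod: "(r * k + j) mod k = j" if "j < k" for r j
    using that assms by simp_all
  fix x y assume x: "x \<in> {..<d} \<times> {..<k}" and y: "y \<in> {..<d} \<times> {..<k}"
  obtain r j r' j' where xy: "x = (r,j)" "y = (r',j')" and jk: "j < k" "j' < k"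
    using x y by auto
  show "((\<lambda>(r,j). r * k + j) x = (\<lambda>(r,j). r * k + j) y) = (x = y)"
  proof
    assume "(\<lambda>(r,j). r * k + j) x = (\<lambda>(r,j). r * k + j) y"
    hence e: "r * k + j = r' * k + j'" using xy by simp
    have "r = r'" using div[OF jk(1), of r] div[OF jk(2), of r'] unfolding e by simp
    moreover have "j = j'" using mod[OF jk(1), of r] mod[OF jk(2), of r'] unfolding e by simp
    ultimately show "x = y" using xy by simp
  qed simp
next
  fix x assume "x \<in> {..<d} \<times> {..<k}"
  moreover have "r * k + j < d * k" if "r < d" "j < k" for r j
  proof -
    have "r * k + j < Suc r * k" using that by simp
    also have "\<dots> \<le> d * k" using that by (intro mult_right_mono) auto
    finally show ?thesis .
  qed
  ultimately show "(\<lambda>(r,j). r * k + j) x \<in> {..<d * k}" by auto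
next
  fix m assume "m \<in> {..<d * k}"
  hence "(m div k, m mod k) \<in> {..<d} \<times> {..<k}" using assms by (auto simp: less_mult_imp_div_less)
  thus "\<exists>x\<in>{..<d} \<times> {..<k}. m = (\<lambda>(r,j). r * k + j) x" by force
qed

text \<open>This sum is the exponent of \<open>b\<close> in the determinant of \<open>F\<^sub>b\<close>.\<close>
lemma sum_mod_blocks:
  fixes d k :: nat
  assumes "k > 0"
  shows "(\<Sum>m<d * k. m mod k) = d * (\<Sum>j<k. j)"
proof -
  have "(\<Sum>m<d * k. m mod k) = (\<Sum>x\<in>{..<d} \<times> {..<k}. ((\<lambda>(r,j). r * k + j) x) mod k)"
    by (rule sum.reindex_bij_betw[OF block_index_bij[OF assms], symmetric])
  also have "\<dots> = (\<Sum>x\<in>{..<d} \<times> {..<k}. snd x)" by (rule sum.cong) auto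
  also have "\<dots> = (\<Sum>r<d. \<Sum>j<k. j)" unfolding sum.cartesian_product by (simp add: split_def)
  also have "\<dots> = d * (\<Sum>j<k. j)" by simp
  finally show ?thesis .
qed

lemma gauss_sum: "2 * (\<Sum>j<k. j) = k * (k - 1 :: nat)"
  by (induction k) (auto simp: algebra_simps)

section \<open>The Frobenius substitution modulo \<open>\<Phi>\<^sub>n\<^sup>k\<close>\<close>

lemma sum_monoms_coeff:
  fixes p :: "'a::comm_ring_1 poly"
  assumes "degree p < N"
  shows "(\<Sum>l<N. monom (coeff p l) l) = p"
proof (rule poly_eqI)
  fix i show "coeff (\<Sum>l<N. monom (coeff p l) l) i = coeff p i"
    using assms by (cases "i < N") (auto simp: coeff_sum coeff_monom coeff_eq_0)
qed

locale frobenius =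
  fixes n k b :: nat
  assumes n: "n \<ge> 1" and k: "k \<ge> 1" and b: "b \<ge> 1" and cop: "coprime b n"
begin

text \<open>\<open>M = \<Phi>\<^sub>n\<^sup>k\<close> has degree \<open>N = k \<phi>(n)\<close>, the rank of \<open>E = \<int>[q]/(M)\<close>. Its complex roots are the
  primitive \<open>n\<close>-th roots of unity \<open>\<zeta>\<^sub>r\<close>, \<open>r < \<phi>(n)\<close>, each of multiplicity \<open>k\<close>.\<close>
definition M :: "int poly" where "M = cyclo n ^ k"
definition N :: nat where "N = totient n * k"

definition root_exp :: "nat \<Rightarrow> nat" where
  "root_exp = (SOME h. bij_betw h {..<totient n} (prim_exps n))"

definition zeta :: "nat \<Rightarrow> complex" where "zeta r = unit_root n (root_exp r)"

lemma n0: "n > 0" and k0: "k > 0" using n k by simp_all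

lemma N_pos: "N > 0" unfolding N_def using n0 k0 by simp

lemma root_exp_bij: "bij_betw root_exp {..<totient n} (prim_exps n)"
proof -
  have "\<exists>h. bij_betw h {..<totient n} (prim_exps n)"
    using ex_bij_betw_nat_finite[of "prim_exps n"] card_prim_exps[OF n0] by (simp add: atLeast0LessThan)
  thus ?thesis unfolding root_exp_def by (rule someI_ex)
qed

lemma root_exp_lt: "r < totient n \<Longrightarrow> root_exp r < n"
  using root_exp_bij by (auto simp: bij_betw_def prim_exps_def)

lemma zeta_inj: "inj_on zeta {..<totient n}"
proof (rule inj_onI)
  fix r r' assume r: "r \<in> {..<totient n}" "r' \<in> {..<totient n}" and "zeta r = zeta r'"
  hence "root_exp r = root_exp r'" unfolding zeta_def using root_exp_lt r by (intro unit_root_inj) auto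
  thus "r = r'" using root_exp_bij r by (auto simp: bij_betw_def inj_on_def)
qed

lemma of_int_poly_M: "of_int_poly M = (\<Prod>s\<in>zeta ` {..<totient n}. [:- s, 1:] ^ k)"
proof -
  have "of_int_poly (cyclo n) = (\<Prod>j\<in>prim_exps n. [:- unit_root n j, 1:])"
    using of_int_poly_cyclo[OF n0] unfolding cyclo_C_def .
  also have "\<dots> = (\<Prod>r<totient n. [:- zeta r, 1:])"
    unfolding zeta_def by (rule prod.reindex_bij_betw[OF root_exp_bij, symmetric])
  finally show ?thesis unfolding M_def of_int_poly_hom.hom_power
    by (simp add: prod_power_distrib prod.reindex[OF zeta_inj])
qed

lemma lead_coeff_M: "lead_coeff M = 1"
proof -
  have "lead_coeff (of_int_poly M :: complex poly) = 1"
    unfolding of_int_poly_M by (simp add: lead_coeff_prod lead_coeff_power)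
  thus ?thesis by simp
qed

lemma degree_M: "degree M = N"
proof -
  have "degree (of_int_poly M :: complex poly) = N" unfolding of_int_poly_M N_def
    by (subst degree_prod_eq_sum_degree) (auto simp: degree_power_eq card_image[OF zeta_inj])
  thus ?thesis by simp
qed

lemma M_dvd_iff_C:
  fixes P :: "complex poly"
  shows "of_int_poly M dvd P \<longleftrightarrow> (\<forall>r<totient n. \<forall>j<k. tc (zeta r) j P = 0)"
proof
  assume dvd: "of_int_poly M dvd P"
  show "\<forall>r<totient n. \<forall>j<k. tc (zeta r) j P = 0"
  proof (intro allI impI)
    fix r j assume "r < totient n" "j < k"
    hence "[:- zeta r, 1:] ^ k dvd (of_int_poly M :: complex poly)"
      unfolding of_int_poly_M by (intro dvd_prodI) auto
    from dvd_trans[OF this dvd] show "tc (zeta r) j P = 0" by (rule tc_dvd) fact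
  qed
next
  assume H: "\<forall>r<totient n. \<forall>j<k. tc (zeta r) j P = 0"
  show "of_int_poly M dvd P"
  proof (cases "P = 0")
    case False
    show ?thesis unfolding of_int_poly_M
      by (rule linear_prod_dvd[OF _ False]) (use H in \<open>auto intro: tc_zero_dvd\<close>)
  qed simp
qed

lemma M_dvd_iff: "M dvd X \<longleftrightarrow> (\<forall>r<totient n. \<forall>j<k. tc (zeta r) j (of_int_poly X) = 0)"
  unfolding M_dvd_iff_C[symmetric]
  using monic_dvd_of_int_poly[OF lead_coeff_M] of_int_poly_hom.hom_dvd by blast

text \<open>Since \<open>b\<close> is prime to \<open>n\<close>, \<open>\<zeta> \<mapsto> \<zeta>\<^sup>b\<close> permutes the primitive \<open>n\<close>-th roots of unity.\<close>
definition sigma :: "nat \<Rightarrow> nat" where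
  "sigma r = inv_into {..<totient n} root_exp (root_exp r * b mod n)"

lemma sigma_lt: "r < totient n \<Longrightarrow> sigma r < totient n"
  and zeta_sigma: "r < totient n \<Longrightarrow> zeta (sigma r) = zeta r ^ b"
proof -
  assume r: "r < totient n"
  have "coprime (root_exp r) n" using root_exp_bij r by (auto simp: bij_betw_def prim_exps_def)
  hence "coprime (root_exp r * b mod n) n" using cop n0 by (simp add: coprime_mod_left_iff)
  hence J: "root_exp r * b mod n \<in> prim_exps n" using n0 by (simp add: prim_exps_def)
  thus "sigma r < totient n" unfolding sigma_def using root_exp_bij
    by (metis bij_betw_def inv_into_into lessThan_iff)
  have "root_exp (sigma r) = root_exp r * b mod n" unfolding sigma_def using root_exp_bij J
    by (metis bij_betw_def f_inv_into_f)
  thus "zeta (sigma r) = zeta r ^ b" unfolding zeta_def unit_root_power using unit_root_mod[OF n0] by simp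
qed

lemma sigma_inj: "inj_on sigma {..<totient n}"
proof (rule inj_onI)
  fix r r' assume r: "r \<in> {..<totient n}" and r': "r' \<in> {..<totient n}" and eq: "sigma r = sigma r'"
  have "unit_root n (root_exp r * b mod n) = unit_root n (root_exp r' * b mod n)"
    using zeta_sigma[of r] zeta_sigma[of r'] r r' eq
    unfolding zeta_def unit_root_power unit_root_mod[OF n0] by simp
  hence "[root_exp r * b = root_exp r' * b] (mod n)"
    unfolding cong_def by (rule unit_root_inj[rotated 2]) (use n0 in auto)
  hence "[root_exp r = root_exp r'] (mod n)" using cop by (simp add: cong_mult_rcancel_nat coprime_commute)
  hence "root_exp r = root_exp r'" using root_exp_lt r r' by (simp add: cong_def)
  thus "r = r'" using root_exp_bij r r' by (auto simp: bij_betw_def inj_on_def)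
qed

lemma tc_frob:
  assumes "r < totient n"
  shows "tc (zeta r) j (of_int_poly (frob b X)) =
   (\<Sum>i\<le>j. tc (zeta (sigma r)) i (of_int_poly X) * tc (zeta r) j ((monom 1 b - [:zeta r ^ b:]) ^ i))"
proof -
  have "tc (zeta r) j (of_int_poly (frob b X)) = tc (zeta r) j (pcompose (of_int_poly X) (monom 1 b))"
    unfolding frob_def by (simp add: of_int_hom.map_poly_pcompose)
  also have "\<dots> = (\<Sum>i\<le>j. tc (poly (monom 1 b) (zeta r)) i (of_int_poly X) *
      tc (zeta r) j ((monom 1 b - [:poly (monom 1 b) (zeta r):]) ^ i))" by (rule tc_pcompose)
  finally show ?thesis using zeta_sigma[OF assms] by (simp add: poly_monom)
qed

lemma M_dvd_frob: assumes "M dvd X" shows "M dvd frob b X"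
  using assms sigma_lt unfolding M_dvd_iff by (auto simp: tc_frob intro!: sum.neutral)

lemma frob_diff: "frob b (p - q) = frob b p - frob b q"
  unfolding frob_def by (simp add: pcompose_diff)

lemma frob_monom: "frob b (monom c l) = monom c (b * l)"
  unfolding frob_def pcompose_monom by (simp add: monom_power smult_monom mult.commute)

text \<open>Since \<open>M\<close> is monic of degree \<open>N\<close>, every class of \<open>E\<close> has a unique representative of degree
  \<open>< N\<close>; its coefficient vector gives coordinates \<open>E \<cong> \<int>\<^sup>N\<close>.\<close>
definition red :: "int poly \<Rightarrow> int poly" where
  "red x = (SOME r. M dvd x - r \<and> degree r < N)"

lemma red: "M dvd x - red x" "degree (red x) < N"
proof -
  obtain q r where qr: "x = M * q + r" "r = 0 \<or> degree r < degree M"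
    using monic_divmod[OF lead_coeff_M] by blast
  hence "M dvd x - r \<and> degree r < N" using degree_M N_pos by auto
  hence "M dvd x - red x \<and> degree (red x) < N" unfolding red_def by (rule someI)
  thus "M dvd x - red x" "degree (red x) < N" by auto
qed

lemma small_dvd_zero: assumes "degree y < N" "M dvd y" shows "y = 0"
  using dvd_imp_degree_le[OF assms(2)] degree_M assms(1) by (cases "y = 0") auto

lemma red_unique: assumes "M dvd x - r" "degree r < N" shows "red x = r"
proof -
  have "M dvd (x - r) - (x - red x)" using assms(1) red(1) by (rule dvd_diff)
  hence "M dvd red x - r" by simp
  with small_dvd_zero[OF degree_diff_less[OF red(2) assms(2)]] show ?thesis by simp
qed

lemma red_diff: "red (x - y) = red x - red y"
proof (rule red_unique)
  have "M dvd (x - red x) - (y - red y)" by (rule dvd_diff[OF red(1) red(1)])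
  thus "M dvd x - y - (red x - red y)" by (simp add: algebra_simps)
qed (rule degree_diff_less[OF red(2) red(2)])

definition lift :: "int vec \<Rightarrow> int poly" where "lift v = (\<Sum>l<N. monom (v $ l) l)"
definition coord :: "int poly \<Rightarrow> int vec" where "coord x = vec N (\<lambda>l. coeff (red x) l)"

lemma coeff_lift: "coeff (lift v) i = (if i < N then v $ i else 0)"
  unfolding lift_def by (simp add: coeff_sum coeff_monom)

lemma degree_lift: "degree (lift v) < N"
proof -
  have "degree (lift v) \<le> N - 1" by (rule degree_le) (auto simp: coeff_lift)
  thus ?thesis using N_pos by simp
qed

lemma small_eqI:
  assumes "degree x < N" "degree y < N" "\<And>i. i < N \<Longrightarrow> coeff x i = coeff y i"
  shows "x = y"
proof (rule poly_eqI)
  fix i show "coeff x i = coeff y i"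
    using assms by (cases "i < N") (auto simp: coeff_eq_0)
qed

lemma lift_coord: "lift (coord x) = red x"
  by (rule small_eqI[OF degree_lift red(2)]) (simp add: coeff_lift coord_def)

lemma red_small: "degree x < N \<Longrightarrow> red x = x"
  by (rule red_unique) simp_all

lemma coord_lift: "v \<in> carrier_vec N \<Longrightarrow> coord (lift v) = v"
  unfolding coord_def red_small[OF degree_lift] by (intro eq_vecI) (auto simp: coeff_lift)

lemma coord_carrier[simp]: "coord x \<in> carrier_vec N"
  unfolding coord_def by simp

lemma coord_diff: "coord (x - y) = coord x - coord y"
  unfolding coord_def red_diff by (intro eq_vecI) auto

lemma lift_eq_zero: assumes "v \<in> carrier_vec N" "M dvd lift v" shows "v = 0\<^sub>v N"
proof -
  have "v = coord (lift v)" using coord_lift[OF assms(1)] by simp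
  also have "lift v = 0" by (rule small_dvd_zero[OF degree_lift assms(2)])
  finally show ?thesis using N_pos red_small[of 0] by (auto simp: coord_def intro!: eq_vecI)
qed

definition Frob :: "int mat" where
  "Frob = mat N N (\<lambda>(l,i). coeff (red (monom 1 (b * i))) l)"

lemma Frob_carrier: "Frob \<in> carrier_mat N N"
  unfolding Frob_def by simp

lemma lift_Frob: assumes c: "c \<in> carrier_vec N"
  shows "lift (Frob *\<^sub>v c) = (\<Sum>i<N. Polynomial.smult (c $ i) (red (monom 1 (b * i))))"
proof (rule poly_eqI)
  fix l
  have "coeff (red (monom 1 (b * i))) l = 0" if "\<not> l < N" for i
    using red(2)[of "monom 1 (b * i)"] that by (simp add: coeff_eq_0)
  thus "coeff (lift (Frob *\<^sub>v c)) l = coeff (\<Sum>i<N. Polynomial.smult (c $ i) (red (monom 1 (b * i)))) l"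
    using c unfolding Frob_def
    by (cases "l < N") (simp_all add: coeff_lift coeff_sum scalar_prod_def atLeast0LessThan mult.commute)
qed

lemma frob_lift: "frob b (lift c) = (\<Sum>i<N. monom (c $ i) (b * i))"
  unfolding lift_def frob_def pcompose_sum by (simp add: frob_monom[unfolded frob_def])

lemma frob_lift_Frob: assumes c: "c \<in> carrier_vec N"
  shows "M dvd frob b (lift c) - lift (Frob *\<^sub>v c)"
proof -
  have "frob b (lift c) - lift (Frob *\<^sub>v c) =
      (\<Sum>i<N. Polynomial.smult (c $ i) (monom 1 (b * i) - red (monom 1 (b * i))))"
    unfolding frob_lift lift_Frob[OF c] by (simp add: sum_subtractf smult_monom smult_diff_right)
  also have "M dvd \<dots>" using red(1) by (intro dvd_sum) (simp add: dvd_smult)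
  finally show ?thesis .
qed

text \<open>Index \<open>m < N\<close> stands for the pair \<open>(m div k, m mod k)\<close>: the root \<open>\<zeta>\<^bsub>m div k\<^esub>\<close> and the order
  \<open>m mod k\<close> of the Taylor coefficient there.\<close>
lemma idx_div: "j < k \<Longrightarrow> (r * k + j) div k = r"
  and idx_mod: "j < k \<Longrightarrow> (r * k + j) mod k = j"
  by simp_all

lemma idx_lt: "r < totient n \<Longrightarrow> j < k \<Longrightarrow> r * k + j < N"
  using block_index_bij[OF k0, of "totient n"] unfolding N_def bij_betw_def by auto

lemma div_lt: "m < N \<Longrightarrow> m div k < totient n"
  unfolding N_def by (simp add: less_mult_imp_div_less)

lemma mod_lt: "m mod k < k"
  using k0 by simp

text \<open>\<open>Tay m l\<close>: the \<open>m\<close>-th Taylor functional applied to the monomial \<open>q\<^sup>l\<close>; nonsingular, since a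
  polynomial of degree \<open>< N\<close> killed by all these functionals is divisible by \<open>M\<close>.\<close>
definition Tay :: "complex mat" where
  "Tay = mat N N (\<lambda>(m,l). tc (zeta (m div k)) (m mod k) (monom 1 l))"

text \<open>The matrix of the chain rule \<open>tc_frob\<close>: block diagonal with lower triangular
  \<open>k \<times> k\<close> blocks.\<close>
definition Tri :: "complex mat" where
  "Tri = mat N N (\<lambda>(m,m'). if m div k = m' div k \<and> m' mod k \<le> m mod k
     then tc (zeta (m div k)) (m mod k) ((monom 1 b - [:zeta (m div k) ^ b:]) ^ (m' mod k)) else 0)"

definition perm :: "nat \<Rightarrow> nat" where
  "perm m = (if m < N then sigma (m div k) * k + m mod k else m)"

definition Tay_perm :: "complex mat" where
  "Tay_perm = mat N N (\<lambda>(m,i). Tay $$ (perm m, i))"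

lemma Tay_carrier: "Tay \<in> carrier_mat N N"
  and Tri_carrier: "Tri \<in> carrier_mat N N"
  and Tay_perm_carrier: "Tay_perm \<in> carrier_mat N N"
  unfolding Tay_def Tri_def Tay_perm_def by simp_all

lemma perm_lt: "m < N \<Longrightarrow> perm m < N"
  unfolding perm_def using idx_lt sigma_lt div_lt mod_lt by simp

lemma perm_div: "m < N \<Longrightarrow> perm m div k = sigma (m div k)"
  and perm_mod: "m < N \<Longrightarrow> perm m mod k = m mod k"
  unfolding perm_def using k0 by simp_all

lemma perm_permutes: "perm permutes {0..<N}"
proof (rule bij_imp_permutes)
  have "inj_on perm {0..<N}"
  proof (rule inj_onI)
    fix x y assume x: "x \<in> {0..<N}" and y: "y \<in> {0..<N}" and e: "perm x = perm y"
    have "sigma (x div k) = sigma (y div k)" using perm_div[of x] perm_div[of y] x y e by simp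
    hence div: "x div k = y div k" by (rule inj_onD[OF sigma_inj]) (use div_lt x y in auto)
    have mod: "x mod k = y mod k" using perm_mod[of x] perm_mod[of y] x y e by simp
    have "x = x div k * k + x mod k" by simp
    also have "\<dots> = y" unfolding div mod by simp
    finally show "x = y" .
  qed
  moreover have "perm ` {0..<N} \<subseteq> {0..<N}" using perm_lt by auto
  ultimately show "bij_betw perm {0..<N} {0..<N}" by (simp add: bij_betw_def endo_inj_surj)
qed (simp add: perm_def)

lemma Tay_Frob_entry: assumes m: "m < N" and i: "i < N"
  shows "(Tay * map_mat of_int Frob) $$ (m,i) = (\<Sum>j'\<le>m mod k. tc (zeta (sigma (m div k))) j' (monom 1 i) *
      tc (zeta (m div k)) (m mod k) ((monom 1 b - [:zeta (m div k) ^ b:]) ^ j'))"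
proof -
  define r j where "r = m div k" and "j = m mod k"
  define h where "h = red (monom 1 (b * i))"
  have r: "r < totient n" and j: "j < k" unfolding r_def j_def using div_lt[OF m] mod_lt .
  have "(Tay * map_mat of_int Frob) $$ (m,i) = (\<Sum>l<N. tc (zeta r) j (monom 1 l) * of_int (coeff h l))"
    using m i unfolding Tay_def Frob_def r_def j_def h_def by (simp add: scalar_prod_def atLeast0LessThan)
  also have "\<dots> = tc (zeta r) j (\<Sum>l<N. monom (coeff (of_int_poly h :: complex poly) l) l)"
    unfolding tc_sum by (rule sum.cong[OF refl], subst tc_monom, simp add: mult.commute)
  also have "(\<Sum>l<N. monom (coeff (of_int_poly h :: complex poly) l) l) = of_int_poly h"
    by (rule sum_monoms_coeff) (simp add: h_def red(2))
  also have "tc (zeta r) j (of_int_poly h) = tc (zeta r) j (of_int_poly (monom 1 (b * i)))"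
  proof -
    have "tc (zeta r) j (of_int_poly (monom 1 (b * i) - h)) = 0"
      using red(1) r j unfolding h_def M_dvd_iff by blast
    thus ?thesis by (simp add: of_int_poly_hom.hom_minus tc_diff)
  qed
  also have "\<dots> = tc (zeta r) j (of_int_poly (frob b (monom 1 i)))" by (simp add: frob_monom)
  also have "\<dots> = (\<Sum>j'\<le>j. tc (zeta (sigma r)) j' (of_int_poly (monom 1 i)) *
      tc (zeta r) j ((monom 1 b - [:zeta r ^ b:]) ^ j'))" by (rule tc_frob[OF r])
  finally show ?thesis unfolding r_def j_def by simp
qed

lemma Tri_Tay_perm_entry: assumes m: "m < N" and i: "i < N"
  shows "(Tri * Tay_perm) $$ (m,i) = (\<Sum>j'\<le>m mod k. tc (zeta (sigma (m div k))) j' (monom 1 i) *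
      tc (zeta (m div k)) (m mod k) ((monom 1 b - [:zeta (m div k) ^ b:]) ^ j'))"
proof -
  define r j where "r = m div k" and "j = m mod k"
  have r: "r < totient n" and j: "j < k" unfolding r_def j_def using div_lt[OF m] mod_lt .
  define g where "g = (\<lambda>m'. Tri $$ (m, m') * Tay_perm $$ (m', i))"
  have "(Tri * Tay_perm) $$ (m,i) = (\<Sum>m'<N. g m')"
    using m i unfolding g_def Tri_def Tay_perm_def by (simp add: scalar_prod_def atLeast0LessThan)
  also have "\<dots> = (\<Sum>m'\<in>(\<lambda>j'. r * k + j') ` {..j}. g m')"
  proof (rule sum.mono_neutral_right)
    show "(\<lambda>j'. r * k + j') ` {..j} \<subseteq> {..<N}" using idx_lt[OF r] j by auto
    show "\<forall>m'\<in>{..<N} - (\<lambda>j'. r * k + j') ` {..j}. g m' = 0"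
    proof
      fix m' assume mm: "m' \<in> {..<N} - (\<lambda>j'. r * k + j') ` {..j}"
      have "\<not> (m div k = m' div k \<and> m' mod k \<le> m mod k)"
      proof
        assume c: "m div k = m' div k \<and> m' mod k \<le> m mod k"
        hence "m' = r * k + m' mod k" "m' mod k \<in> {..j}"
          unfolding r_def j_def using div_mult_mod_eq[of m' k] by auto
        thus False using mm by blast
      qed
      thus "g m' = 0" unfolding g_def Tri_def using m mm by auto
    qed
  qed simp
  also have "\<dots> = (\<Sum>j'\<le>j. g (r * k + j'))" by (subst sum.reindex) (auto simp: inj_on_def)
  also have "\<dots> = (\<Sum>j'\<le>j. tc (zeta (sigma r)) j' (monom 1 i) *
      tc (zeta r) j ((monom 1 b - [:zeta r ^ b:]) ^ j'))"
  proof (rule sum.cong[OF refl])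
    fix j' assume "j' \<in> {..j}"
    hence j': "j' \<le> j" "j' < k" using j by auto
    have mm: "r * k + j' < N" using idx_lt[OF r j'(2)] .
    show "g (r * k + j') = tc (zeta (sigma r)) j' (monom 1 i) *
      tc (zeta r) j ((monom 1 b - [:zeta r ^ b:]) ^ j')"
      unfolding g_def Tay_perm_def Tri_def Tay_def
      using m mm i perm_lt[OF mm] perm_div[OF mm] perm_mod[OF mm] idx_div[OF j'(2)] idx_mod[OF j'(2)] j'
      unfolding r_def j_def by simp
  qed
  finally show ?thesis unfolding r_def j_def .
qed

lemma Tay_Frob: "Tay * map_mat of_int Frob = Tri * Tay_perm"
  by (rule eq_matI) (use Tay_Frob_entry Tri_Tay_perm_entry Tay_carrier Frob_carrier Tri_carrier
      Tay_perm_carrier in auto)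

lemma det_Tay: "det Tay \<noteq> 0"
proof
  assume "det Tay = 0"
  then obtain v where v: "v \<in> carrier_vec N" "v \<noteq> 0\<^sub>v N" "Tay *\<^sub>v v = 0\<^sub>v N"
    using det_0_iff_vec_prod_zero[of Tay N] unfolding Tay_def by auto
  define P :: "complex poly" where "P = (\<Sum>l<N. monom (v $ l) l)"
  have cP: "coeff P l = (if l < N then v $ l else 0)" for l unfolding P_def by (simp add: coeff_sum coeff_monom)
  have "tc (zeta r) j P = 0" if r: "r < totient n" and j: "j < k" for r j
  proof -
    have mm: "r * k + j < N" by (rule idx_lt[OF r j])
    have "tc (zeta r) j P = (\<Sum>l<N. tc (zeta r) j (monom 1 l) * v $ l)"
      unfolding P_def tc_sum by (rule sum.cong[OF refl], subst tc_monom, rule mult.commute)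
    also have "\<dots> = (Tay *\<^sub>v v) $ (r * k + j)"
      using mm v(1) j by (simp add: Tay_def scalar_prod_def atLeast0LessThan)
    finally show ?thesis using v(3) mm by simp
  qed
  hence dvd: "of_int_poly M dvd P" unfolding M_dvd_iff_C by blast
  have "degree P \<le> N - 1" by (rule degree_le) (auto simp: cP)
  hence deg: "degree P < N" using N_pos by simp
  have "P = 0"
  proof (rule ccontr)
    assume "P \<noteq> 0"
    from dvd_imp_degree_le[OF dvd this] deg degree_M show False by simp
  qed
  have "v = 0\<^sub>v N"
  proof (rule eq_vecI)
    fix i assume "i < dim_vec (0\<^sub>v N :: complex vec)"
    thus "v $ i = 0\<^sub>v N $ i" using cP[of i] \<open>P = 0\<close> by simp
  qed (use v(1) in simp)
  with v(2) show False by simp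
qed

lemma det_Tri: "det Tri = (\<Prod>m<N. (of_nat b * zeta (m div k) ^ (b - 1)) ^ (m mod k))"
proof -
  have "det Tri = prod_list (diag_mat Tri)"
  proof (rule det_lower_triangular)
    fix i j assume ij: "i < j" "j < N"
    have "\<not> (i div k = j div k \<and> j mod k \<le> i mod k)"
    proof
      assume c: "i div k = j div k \<and> j mod k \<le> i mod k"
      have "j = (j div k) * k + j mod k" by simp
      also have "\<dots> \<le> (i div k) * k + i mod k" using c by (metis add_left_mono)
      also have "\<dots> = i" by simp
      finally show False using ij by simp
    qed
    thus "Tri $$ (i,j) = 0" unfolding Tri_def using ij by auto
  qed (simp add: Tri_def)
  also have "\<dots> = (\<Prod>m<N. Tri $$ (m,m))" by (simp add: prod_list_diag_prod Tri_def atLeast0LessThan)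
  also have "\<dots> = (\<Prod>m<N. (of_nat b * zeta (m div k) ^ (b - 1)) ^ (m mod k))"
    by (rule prod.cong) (simp_all add: Tri_def tc_power_diag)
  finally show ?thesis .
qed

text \<open>Taking absolute values (\<open>|\<zeta>| = 1\<close>) in \<open>det Tay * det Frob = det Tri * \<plusminus>det Tay\<close>.\<close>
lemma abs_det_Frob: "\<bar>det Frob\<bar> = int b ^ (\<Sum>m<N. m mod k)"
proof -
  have "det Tay * of_int (det Frob) = det Tay * det (map_mat of_int Frob)" by (simp add: of_int_hom.hom_det)
  also have "\<dots> = det (Tri * Tay_perm)" unfolding Tay_Frob[symmetric]
    using Tay_carrier Frob_carrier by (simp add: det_mult)
  also have "\<dots> = det Tri * (signof perm * det Tay)" unfolding Tay_perm_def
    using Tri_carrier Tay_perm_carrier det_permute_rows[OF Tay_carrier perm_permutes]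
    by (simp add: det_mult Tay_perm_def)
  finally have "of_int (det Frob) = det Tri * signof perm" using det_Tay by (simp add: mult_ac)
  hence "norm (of_int (det Frob) :: complex) = norm (det Tri) * norm (signof perm :: complex)"
    by (simp add: norm_mult)
  moreover have "norm (signof perm :: complex) = 1" by (cases perm rule: sign_cases) simp_all
  ultimately have "real_of_int \<bar>det Frob\<bar> = norm (det Tri)" by simp
  also have "norm (det Tri) = (\<Prod>m<N. real b ^ (m mod k))"
    unfolding det_Tri prod_norm[symmetric] by (simp add: norm_mult norm_power zeta_def unit_root_def)
  also have "\<dots> = real_of_int (int b ^ (\<Sum>m<N. m mod k))" by (simp add: power_sum)
  finally show ?thesis by (simp only: of_int_eq_iff)
qed

lemma det_Frob_nonzero: "det Frob \<noteq> 0"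
proof -
  have "\<bar>det Frob\<bar> > 0" unfolding abs_det_Frob using b by simp
  thus ?thesis by simp
qed

text \<open>The preimage in \<open>\<int>[q]\<close> of \<open>F\<^sub>b(E)\<close>; in coordinates it is the lattice spanned by \<open>Frob\<close>.\<close>
definition img :: "int poly set" where
  "img = {frob b p + cyclo n ^ k * r | p r. True}"

lemma M_dvd_frob_red: "M dvd frob b p - frob b (lift (coord p))"
  using M_dvd_frob[OF red(1)[of p]] by (simp add: lift_coord frob_diff)

lemma img_iff: "x \<in> img \<longleftrightarrow> coord x \<in> lat Frob"
proof
  assume "x \<in> img"
  then obtain p r where x: "x = frob b p + M * r" unfolding img_def M_def by auto
  define c where "c = coord p"
  have c: "c \<in> carrier_vec N" unfolding c_def by simp
  have "x - lift (Frob *\<^sub>v c) =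
      (frob b p - frob b (lift c)) + (frob b (lift c) - lift (Frob *\<^sub>v c)) + M * r"
    unfolding x by simp
  also have "M dvd \<dots>"
    using M_dvd_frob_red frob_lift_Frob[OF c] unfolding c_def by (intro dvd_add) auto
  finally have "M dvd x - lift (Frob *\<^sub>v c)" .
  hence "red x = lift (Frob *\<^sub>v c)" by (rule red_unique[OF _ degree_lift])
  hence "coord x = coord (lift (Frob *\<^sub>v c))" unfolding coord_def red_small[OF degree_lift] by simp
  also have "\<dots> = Frob *\<^sub>v c" using Frob_carrier c by (intro coord_lift) simp
  finally show "coord x \<in> lat Frob" using lat_mult_vec[OF Frob_carrier c] by simp
next
  assume "coord x \<in> lat Frob"
  then obtain c where c: "c \<in> carrier_vec N" "coord x = Frob *\<^sub>v c"
    unfolding lat_def using Frob_carrier by auto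
  have "M dvd (x - lift (coord x)) - (frob b (lift c) - lift (Frob *\<^sub>v c))"
    using red(1)[of x] frob_lift_Frob[OF c(1)] unfolding lift_coord by (rule dvd_diff)
  hence "M dvd x - frob b (lift c)" unfolding c(2) by simp
  then obtain q where "x - frob b (lift c) = cyclo n ^ k * q" unfolding M_def by (elim dvdE)
  hence "x = frob b (lift c) + cyclo n ^ k * q" by (simp add: algebra_simps)
  thus "x \<in> img" unfolding img_def by blast
qed

lemma img_diff: "x \<in> img \<Longrightarrow> y \<in> img \<Longrightarrow> x - y \<in> img"
  unfolding img_iff coord_diff using lat_diff[OF Frob_carrier] by blast

lemma zero_img: "0 \<in> img"
  unfolding img_def by (auto simp: frob_def intro!: exI[of _ 0])

lemma coset_eq: "((\<lambda>s. x + s) ` img = (\<lambda>s. y + s) ` img) \<longleftrightarrow> x - y \<in> img"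
proof
  assume "(\<lambda>s. x + s) ` img = (\<lambda>s. y + s) ` img"
  moreover have "x \<in> (\<lambda>s. x + s) ` img" using zero_img by force
  ultimately obtain s where "s \<in> img" "x = y + s" by auto
  thus "x - y \<in> img" by simp
next
  have shift: "(\<lambda>s. x + s) ` img \<subseteq> (\<lambda>s. y + s) ` img" if "x - y \<in> img" for x y
  proof
    fix z assume "z \<in> (\<lambda>s. x + s) ` img"
    then obtain s where s: "s \<in> img" "z = x + s" by auto
    have "s - (y - x) \<in> img" using img_diff[OF s(1) img_diff[OF zero_img that]] by simp
    moreover have "z = y + (s - (y - x))" using s by simp
    ultimately show "z \<in> (\<lambda>s. y + s) ` img" by blast
  qed
  assume "x - y \<in> img"
  moreover have "y - x \<in> img" using img_diff[OF zero_img \<open>x - y \<in> img\<close>] by simp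
  ultimately show "(\<lambda>s. x + s) ` img = (\<lambda>s. y + s) ` img" using shift by blast
qed

text \<open>The cosets of \<open>img\<close> correspond to the classes of \<open>\<int>\<^sup>N / lat Frob\<close>.\<close>
lemma card_cosets: "card ((\<lambda>x. (\<lambda>s. x + s) ` img) ` UNIV) = nat \<bar>det Frob\<bar>"
proof -
  obtain R where R: "finite R" "card R = nat \<bar>det Frob\<bar>" "reps N Frob R"
    using lattice_index[OF Frob_carrier det_Frob_nonzero] unfolding index_is_det_def by blast
  have Rc: "R \<subseteq> carrier_vec N" and Rex: "\<forall>v\<in>carrier_vec N. \<exists>r\<in>R. v - r \<in> lat Frob"
    and Run: "\<forall>r1\<in>R. \<forall>r2\<in>R. r1 - r2 \<in> lat Frob \<longrightarrow> r1 = r2"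
    using R(3) unfolding reps_def by auto
  have coset_lift: "(\<lambda>s. lift v + s) ` img = (\<lambda>s. lift w + s) ` img \<longleftrightarrow> v - w \<in> lat Frob"
    if "v \<in> R" "w \<in> R" for v w
  proof -
    have "v \<in> carrier_vec N" "w \<in> carrier_vec N" using that Rc by auto
    hence "coord (lift v - lift w) = v - w" by (simp add: coord_diff coord_lift)
    thus ?thesis unfolding coset_eq img_iff by simp
  qed
  have "bij_betw (\<lambda>v. (\<lambda>s. lift v + s) ` img) R ((\<lambda>x. (\<lambda>s. x + s) ` img) ` UNIV)"
  proof (rule bij_betw_imageI)
    show "inj_on (\<lambda>v. (\<lambda>s. lift v + s) ` img) R"
    proof (rule inj_onI)
      fix v w assume "v \<in> R" "w \<in> R" "(\<lambda>s. lift v + s) ` img = (\<lambda>s. lift w + s) ` img"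
      thus "v = w" using coset_lift[THEN iffD1] Run by blast
    qed
    show "(\<lambda>v. (\<lambda>s. lift v + s) ` img) ` R = (\<lambda>x. (\<lambda>s. x + s) ` img) ` UNIV"
    proof (intro equalityI subsetI)
      fix C assume "C \<in> (\<lambda>x. (\<lambda>s. x + s) ` img) ` UNIV"
      then obtain x where C: "C = (\<lambda>s. x + s) ` img" by auto
      obtain r where r: "r \<in> R" "coord x - r \<in> lat Frob" using Rex coord_carrier by blast
      have "r \<in> carrier_vec N" using r(1) Rc by auto
      hence "coord (x - lift r) = coord x - r" by (simp add: coord_diff coord_lift)
      hence "C = (\<lambda>s. lift r + s) ` img" unfolding C coset_eq img_iff using r(2) by simp
      thus "C \<in> (\<lambda>v. (\<lambda>s. lift v + s) ` img) ` R" using r(1) by blast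
    qed blast
  qed
  thus ?thesis using R(2) by (simp add: bij_betw_same_card)
qed

lemma index_formula: "nat \<bar>det Frob\<bar> = b ^ (k * (k - 1) * totient n div 2)"
proof -
  have "k * (k - 1) * totient n div 2 = (\<Sum>m<N. m mod k)"
    unfolding N_def sum_mod_blocks[OF k0] gauss_sum[symmetric] by simp
  thus ?thesis unfolding abs_det_Frob by (simp add: nat_power_eq)
qed

lemma lincomb_monoms:
  "length c = N \<Longrightarrow> lincomb c (map (\<lambda>i. monom 1 i) [0..<N]) = lift (vec_of_list c)"
  unfolding lincomb_def lift_def by (intro sum.cong) (auto simp: smult_monom vec_of_list_index)

lemma lincomb_frob_monoms:
  "length c = N \<Longrightarrow> lincomb c (map (\<lambda>i. frob b (monom 1 i)) [0..<N]) = frob b (lift (vec_of_list c))"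
  unfolding lincomb_def frob_lift by (intro sum.cong) (auto simp: smult_monom frob_monom vec_of_list_index)

lemma vec_of_list_zero:
  assumes "length c = N" "vec_of_list c = 0\<^sub>v N"
  shows "\<forall>i<length c. c ! i = 0"
proof (intro allI impI)
  fix i assume "i < length c"
  hence "c ! i = vec_of_list c $ i" by (simp add: vec_of_list_index)
  thus "c ! i = 0" using assms \<open>i < length c\<close> by simp
qed

lemma basis_E: "quot_Z_basis M UNIV (map (\<lambda>i. monom 1 i) [0..<N])"
proof (rule quot_Z_basisI)
  fix x :: "int poly"
  define c where "c = list_of_vec (coord x)"
  have len: "length c = N" unfolding c_def by simp
  have "lincomb c (map (\<lambda>i. monom 1 i) [0..<N]) = red x"
    unfolding lincomb_monoms[OF len] unfolding c_def vec_list lift_coord ..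
  thus "\<exists>c. length c = length (map (\<lambda>i. monom 1 i) [0..<N]) \<and>
      M dvd x - lincomb c (map (\<lambda>i. monom 1 i) [0..<N])"
    using len red(1)[of x] by (intro exI[of _ c]) simp
next
  fix c assume len: "length c = length (map (\<lambda>i. monom 1 i) [0..<N])"
    and dvd: "M dvd lincomb c (map (\<lambda>i. monom 1 i) [0..<N])"
  have len': "length c = N" using len by simp
  have "vec_of_list c \<in> carrier_vec N" by (rule carrier_vecI) (simp add: len')
  moreover have "M dvd lift (vec_of_list c)" using dvd unfolding lincomb_monoms[OF len'] .
  ultimately have "vec_of_list c = 0\<^sub>v N" by (rule lift_eq_zero)
  thus "\<forall>i<length c. c ! i = 0" by (rule vec_of_list_zero[OF len'])
qed simp

text \<open>\<open>F\<^sub>b\<close> is injective on \<open>E\<close>, because \<open>det Frob \<noteq> 0\<close>.\<close>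
lemma frob_lift_eq_zero:
  assumes v: "v \<in> carrier_vec N" and dvd: "M dvd frob b (lift v)"
  shows "v = 0\<^sub>v N"
proof (rule ccontr)
  assume v0: "v \<noteq> 0\<^sub>v N"
  have "M dvd frob b (lift v) - (frob b (lift v) - lift (Frob *\<^sub>v v))"
    using dvd frob_lift_Frob[OF v] by (rule dvd_diff)
  hence "M dvd lift (Frob *\<^sub>v v)" by simp
  moreover have "Frob *\<^sub>v v \<in> carrier_vec N" using Frob_carrier v by simp
  ultimately have "Frob *\<^sub>v v = 0\<^sub>v N" using lift_eq_zero by blast
  with v v0 have "det Frob = 0" unfolding det_0_iff_vec_prod_zero[OF Frob_carrier] by blast
  with det_Frob_nonzero show False ..
qed

lemma basis_img: "quot_Z_basis M img (map (\<lambda>i. frob b (monom 1 i)) [0..<N])"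
proof (rule quot_Z_basisI)
  show "set (map (\<lambda>i. frob b (monom 1 i)) [0..<N]) \<subseteq> img"
  proof
    fix y assume "y \<in> set (map (\<lambda>i. frob b (monom 1 i)) [0..<N])"
    then obtain i where "y = frob b (monom 1 i)" by auto
    thus "y \<in> img" unfolding img_def by (intro CollectI exI[of _ "monom 1 i"] exI[of _ 0]) simp
  qed
next
  fix x assume "x \<in> img"
  then obtain p r where x: "x = frob b p + M * r" unfolding img_def M_def by auto
  define c where "c = list_of_vec (coord p)"
  have len: "length c = N" unfolding c_def by simp
  have "lincomb c (map (\<lambda>i. frob b (monom 1 i)) [0..<N]) = frob b (lift (coord p))"
    unfolding lincomb_frob_monoms[OF len] unfolding c_def vec_list ..
  hence "x - lincomb c (map (\<lambda>i. frob b (monom 1 i)) [0..<N]) =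
      (frob b p - frob b (lift (coord p))) + M * r" unfolding x by simp
  also have "M dvd \<dots>" using M_dvd_frob_red by (rule dvd_add) simp
  finally have "M dvd x - lincomb c (map (\<lambda>i. frob b (monom 1 i)) [0..<N])" .
  thus "\<exists>c. length c = length (map (\<lambda>i. frob b (monom 1 i)) [0..<N]) \<and>
      M dvd x - lincomb c (map (\<lambda>i. frob b (monom 1 i)) [0..<N])"
    using len by (intro exI[of _ c]) simp
next
  fix c assume len: "length c = length (map (\<lambda>i. frob b (monom 1 i)) [0..<N])"
    and dvd: "M dvd lincomb c (map (\<lambda>i. frob b (monom 1 i)) [0..<N])"
  have len': "length c = N" using len by simp
  define v where "v = vec_of_list c"
  have v: "v \<in> carrier_vec N" unfolding v_def by (rule carrier_vecI) (simp add: len')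
  have "M dvd frob b (lift v)" using dvd unfolding lincomb_frob_monoms[OF len'] v_def .
  hence "v = 0\<^sub>v N" by (rule frob_lift_eq_zero[OF v])
  thus "\<forall>i<length c. c ! i = 0" unfolding v_def by (rule vec_of_list_zero[OF len'])
qed

end

theorem proposition11:
  fixes n k b :: nat
  assumes "n \<ge> 1" and "k \<ge> 1" and "b \<ge> 1" and "coprime b n"
  defines "M \<equiv> cyclo n ^ k"
    and "S \<equiv> {frob b p + cyclo n ^ k * r | p r. True}"
  shows "(\<forall>p p'. M dvd (p - p') \<longrightarrow> M dvd (frob b p - frob b p'))
    \<and> (\<exists>m. (\<exists>vs. length vs = m \<and> quot_Z_basis M UNIV vs)
          \<and> (\<exists>ws. length ws = m \<and> quot_Z_basis M S ws))
    \<and> card ((\<lambda>x. (\<lambda>s. x + s) ` S) ` UNIV) = b ^ (k * (k - 1) * totient n div 2)"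
proof -
  interpret F: frobenius n k b using assms(1-4) by unfold_locales
  have M: "M = F.M" and S: "S = F.img" unfolding M_def S_def F.M_def F.img_def by simp_all
  have compatible: "\<forall>p p'. M dvd (p - p') \<longrightarrow> M dvd (frob b p - frob b p')"
  proof (intro allI impI)
    fix p p' assume "M dvd p - p'"
    thus "M dvd frob b p - frob b p'" using F.M_dvd_frob[of "p - p'"] unfolding M by (simp add: F.frob_diff)
  qed
  have bases: "\<exists>m. (\<exists>vs. length vs = m \<and> quot_Z_basis M UNIV vs)
      \<and> (\<exists>ws. length ws = m \<and> quot_Z_basis M S ws)"
  proof (intro exI conjI)
    show "length (map (\<lambda>i. monom 1 i) [0..<F.N]) = F.N" by simp
    show "quot_Z_basis M UNIV (map (\<lambda>i. monom 1 i) [0..<F.N])" unfolding M by (rule F.basis_E)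
    show "length (map (\<lambda>i. frob b (monom 1 i)) [0..<F.N]) = F.N" by simp
    show "quot_Z_basis M S (map (\<lambda>i. frob b (monom 1 i)) [0..<F.N])" unfolding M S by (rule F.basis_img)
  qed
  have index: "card ((\<lambda>x. (\<lambda>s. x + s) ` S) ` UNIV) = b ^ (k * (k - 1) * totient n div 2)"
    unfolding S F.card_cosets F.index_formula ..
  show ?thesis using compatible bases index by (intro conjI)
qed

end
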